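(* Let $(Z_n)_{n\ge0}$ be a Galton--Watson process with $Z_0=1$ and offspring distribution $F$ on $\{0,1,2,\dots\}$ with mean $m:=\mathbb E\xi>1$, and let $W_n:=Z_n/m^n$. Assume $\mathbb E\xi^2<\infty$, $F$ is dominated varying, i.e. $\sup_x\overline F(x/2)/\overline F(x)<\infty$, and $F$ is $x^\gamma$-insensitive for some $\gamma>1/2$. Then for every fixed $n\ge1$, $$\Pr\{W_n>x\}\sim\sum_{i=0}^{n-1}m^i\overline F(m^{i+1}x)\quad\text{as }x\to\infty.$$
   Context: The process is defined by $Z_{n+1}=\sum_{i=1}^{Z_n}\xi_i^{(n)}$, where $\xi_i^{(n)}$, $i\ge1$, $n\ge0$, are i.i.d. copies of a random variable $\xi$ with distribution $F$ on $\{0,1,2,\dots\}$; $\overline F(x):=\Pr\{\xi>x\}$ for real $x$. $f\sim g$ means $f/g\to1$. $F$ is $x^\gamma$-insensitive if $\overline F(x+x^\gamma)\sim\overline F(x)$ as $x\to\infty$. *)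

theory Defs
  imports "HOL-Probability.Probability" "HOL-Library.Landau_Symbols"
begin

primrec conv_pow :: "nat pmf \<Rightarrow> nat \<Rightarrow> nat pmf" where
  "conv_pow F 0 = return_pmf 0"
| "conv_pow F (Suc k) = bind_pmf F (\<lambda>a. map_pmf (\<lambda>b. a + b) (conv_pow F k))"

text \<open>Law of Z_n of the Galton--Watson process with Z_0 = 1 and offspring law F:
  Z_(n+1) is the sum of Z_n i.i.d. copies of xi, independent of Z_n.\<close>
primrec gw :: "nat pmf \<Rightarrow> nat \<Rightarrow> nat pmf" where
  "gw F 0 = return_pmf 1"
| "gw F (Suc n) = bind_pmf (gw F n) (conv_pow F)"

definition tail :: "nat pmf \<Rightarrow> real \<Rightarrow> real" where
  "tail F x = measure_pmf.prob F {k. real k > x}"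

definition offspring_mean :: "nat pmf \<Rightarrow> real" where
  "offspring_mean F = measure_pmf.expectation F real"

end

theory Submission
  imports Defs "HOL-Real_Asymp.Real_Asymp"
begin

text \<open>
  Write \<open>q\<^sub>k(t)\<close> for the tail of the \<open>k\<close>-fold convolution of \<open>F\<close>. Conditioning on \<open>Z\<^sub>n\<close> gives
  \<open>P{Z\<^sub>n\<^sub>+\<^sub>1 > m y} = E q\<^bsub>Z\<^sub>n\<^esub>(m y)\<close>. For an integer variable \<open>K\<close> with mean \<open>\<mu>\<close> whose tail is
  dominated varying and insensitive to shifts by \<open>y\<^sup>\<beta>\<close> (some \<open>1/2 < \<beta> < \<gamma>\<close>), one shows
  \<open>E q\<^sub>K(m y) \<sim> P{K > y} + \<mu> F\<^sup>-(m y)\<close> by splitting over the value \<open>k\<close> of \<open>K\<close>: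
  for bounded \<open>k\<close>, \<open>q\<^sub>k(t) \<sim> k F\<^sup>-(t)\<close> (one big jump); for \<open>k \<le> y/2\<close> a Chernoff bound together with
  the polynomial lower bound on \<open>F\<^sup>-\<close> forced by dominated variation gives \<open>q\<^sub>k(m y) \<le> C k F\<^sup>-(m y)\<close>,
  whose total contribution is small by uniform integrability of \<open>K\<close>; for
  \<open>y/2 < k \<le> y - y\<^sup>\<beta>\<close> and \<open>k \<ge> y + y\<^sup>\<beta>\<close> the law of large numbers at the scale \<open>y\<^sup>\<beta> \<gg> \<surd>y\<close>
  (again by Chernoff bounds, using the second moment) makes \<open>q\<^sub>k(m y)\<close> negligible, resp. close to 1.
  Applied with \<open>K = Z\<^sub>n\<close>, this proves the claim by induction on \<open>n\<close>, the required regularity of the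
  tail of \<open>W\<^sub>n\<close> being inherited from its asymptotic form.
\<close>

lemma integrable_measure_pmf_bounded:
  fixes f :: "'a \<Rightarrow> real"
  assumes "\<And>a. \<bar>f a\<bar> \<le> B"
  shows "integrable (measure_pmf M) f"
  by (rule measure_pmf.integrable_const_bound[where B=B]) (use assms in auto)

lemma prob_bind_pmf:
  "measure_pmf.prob (bind_pmf M N) A = measure_pmf.expectation M (\<lambda>x. measure_pmf.prob (N x) A)"
proof -
  have int: "integrable (measure_pmf M) (\<lambda>x. measure_pmf.prob (N x) A)"
    by (rule integrable_measure_pmf_bounded[where B=1]) auto
  have "emeasure (measure_pmf (bind_pmf M N)) A = (\<integral>\<^sup>+x. ennreal (measure_pmf.prob (N x) A) \<partial>M)"
    by (subst emeasure_bind_pmf) (simp add: measure_pmf.emeasure_eq_measure)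
  also have "\<dots> = ennreal (measure_pmf.expectation M (\<lambda>x. measure_pmf.prob (N x) A))"
    by (rule nn_integral_eq_integral[OF int]) auto
  finally show ?thesis
    by (simp add: measure_pmf.emeasure_eq_measure integral_nonneg_AE)
qed

subsection \<open>Tails of distributions on the naturals\<close>

lemma tail_nonneg: "tail G x \<ge> 0"
  by (simp add: tail_def)

lemma tail_le_one: "tail G x \<le> 1"
  by (simp add: tail_def)

lemma tail_antimono: "x \<le> y \<Longrightarrow> tail G y \<le> tail G x"
  unfolding tail_def by (intro measure_pmf.finite_measure_mono) auto

lemma tail_negative: "x < 0 \<Longrightarrow> tail G x = 1"
proof -
  assume "x < 0"
  then have "{k. real k > x} = UNIV" by auto
  then show ?thesis by (simp add: tail_def)
qed

lemma integrable_tail_comp: "integrable (measure_pmf M) (\<lambda>a. tail (G a) (f a))"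
  by (rule integrable_measure_pmf_bounded[where B=1]) (simp add: tail_nonneg tail_le_one)

lemma integrable_indicator_gt: "integrable (measure_pmf G) (\<lambda>a. if real a > x then 1 else 0 :: real)"
  by (rule integrable_measure_pmf_bounded[where B=1]) auto

lemma expectation_indicator_gt:
  "measure_pmf.expectation G (\<lambda>a. if real a > x then 1 else 0) = tail G x"
proof -
  have "(\<lambda>a. if real a > x then 1 else 0 :: real) = indicator {a. real a > x}"
    by (auto simp: indicator_def)
  then show ?thesis by (simp add: tail_def)
qed

lemma expectation_indicator_le:
  "measure_pmf.expectation G (\<lambda>a. if real a \<le> x then 1 else 0) = 1 - tail G x"
proof -
  have "(\<lambda>a. if real a \<le> x then 1 else 0 :: real) = (\<lambda>a. 1 - (if real a > x then 1 else 0))"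
    by auto
  then show ?thesis
    by (simp add: Bochner_Integration.integral_diff integrable_indicator_gt expectation_indicator_gt)
qed

lemma expectation_indicator_gt_mult:
  "measure_pmf.expectation G (\<lambda>a. (if real a > x then 1 else 0) * c) = tail G x * c"
  using integrable_indicator_gt by (simp add: expectation_indicator_gt)

lemma tail_conv_pow_0: "tail (conv_pow F 0) t = (if t < 0 then 1 else 0)"
  by (simp add: tail_def)

lemma tail_conv_pow_Suc:
  "tail (conv_pow F (Suc k)) t = measure_pmf.expectation F (\<lambda>a. tail (conv_pow F k) (t - real a))"
  unfolding tail_def conv_pow.simps prob_bind_pmf
  by (simp add: algebra_simps vimage_def)

lemma tail_gw_Suc:
  "tail (gw F (Suc n)) t = measure_pmf.expectation (gw F n) (\<lambda>k. tail (conv_pow F k) t)"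
  by (simp add: tail_def prob_bind_pmf)

definition mean_above :: "nat pmf \<Rightarrow> real \<Rightarrow> real" where
  "mean_above G x = measure_pmf.expectation G (\<lambda>k. real k * (if real k > x then 1 else 0))"

lemma mean_above_nonneg: "mean_above G x \<ge> 0"
  unfolding mean_above_def by (rule integral_nonneg_AE) auto

lemma integrable_mean_above:
  "integrable (measure_pmf G) real \<Longrightarrow>
     integrable (measure_pmf G) (\<lambda>k. real k * (if real k > x then 1 else 0))"
  by (rule Bochner_Integration.integrable_bound) (auto intro!: AE_pmfI)

lemma integrable_mean_below:
  "integrable (measure_pmf G) real \<Longrightarrow>
     integrable (measure_pmf G) (\<lambda>k. real k * (if real k \<le> x then 1 else 0))"
  by (rule Bochner_Integration.integrable_bound) (auto intro!: AE_pmfI)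

lemma mean_above_tendsto_0:
  assumes "integrable (measure_pmf G) real"
  shows "(mean_above G \<longlongrightarrow> 0) at_top"
proof -
  have "((\<lambda>x. measure_pmf.expectation G (\<lambda>k. real k * (if real k > x then 1 else 0)))
      \<longlongrightarrow> measure_pmf.expectation G (\<lambda>k. 0::real)) at_top"
  proof (rule integral_dominated_convergence_at_top[where w=real])
    show "AE k in measure_pmf G. ((\<lambda>x. real k * (if real k > x then 1 else 0)) \<longlongrightarrow> 0) at_top"
    proof (rule AE_pmfI)
      fix k :: nat
      have "eventually (\<lambda>x. real k * (if real k > x then 1 else 0) = 0) at_top"
        using eventually_ge_at_top[of "real k"] by eventually_elim auto
      then show "((\<lambda>x. real k * (if real k > x then 1 else 0)) \<longlongrightarrow> 0) at_top"
        by (rule tendsto_eventually)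
    qed
  qed (use assms in \<open>auto intro!: AE_pmfI\<close>)
  then show ?thesis by (simp add: mean_above_def[abs_def])
qed

lemma mean_below_eq:
  assumes "integrable (measure_pmf G) real"
  shows "measure_pmf.expectation G (\<lambda>k. real k * (if real k \<le> x then 1 else 0)) =
           measure_pmf.expectation G real - mean_above G x"
proof -
  have "(\<lambda>k. real k * (if real k \<le> x then 1 else 0)) =
        (\<lambda>k. real k - real k * (if real k > x then 1 else 0))"
    by auto
  then show ?thesis
    using assms integrable_mean_above[OF assms]
    by (simp add: mean_above_def Bochner_Integration.integral_diff)
qed

lemma exists_mean_above_le:
  assumes "integrable (measure_pmf G) real" and "\<epsilon> > 0"
  obtains x where "mean_above G x \<le> \<epsilon>" and "x \<ge> 0"
proof -
  have "eventually (\<lambda>x. mean_above G x < \<epsilon> \<and> x \<ge> 0) at_top"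
    using order_tendstoD(2)[OF mean_above_tendsto_0[OF assms(1)] assms(2)] eventually_ge_at_top[of 0]
    by eventually_elim auto
  then obtain x where "mean_above G x < \<epsilon>" "x \<ge> 0"
    by (auto simp: eventually_at_top_linorder)
  then show ?thesis using that by force
qed

lemma expectation_upper_bound_terms:
  fixes a b r c x d \<delta> :: real
  assumes int: "integrable (measure_pmf G) real"
  defines "f \<equiv> \<lambda>k. (if real k > a then 1 else 0) + r * (if real k > b then 1 else 0)
                  + c * (real k * (if real k > x then 1 else 0)) + d * (real k + \<delta>)"
  shows "integrable (measure_pmf G) f"
    and "measure_pmf.expectation G f
           = tail G a + r * tail G b + c * mean_above G x + d * (measure_pmf.expectation G real + \<delta>)"
proof -
  have int_terms: "integrable (measure_pmf G) (\<lambda>k. if real k > a then 1 else 0 :: real)"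
    "integrable (measure_pmf G) (\<lambda>k. r * (if real k > b then 1 else 0 :: real))"
    "integrable (measure_pmf G) (\<lambda>k. c * (real k * (if real k > x then 1 else 0)))"
    "integrable (measure_pmf G) (\<lambda>k. d * (real k + \<delta>))"
    by (intro Bochner_Integration.integrable_mult_right Bochner_Integration.integrable_add
        integrable_indicator_gt integrable_mean_above int measure_pmf.integrable_const)+
  then show "integrable (measure_pmf G) f"
    unfolding f_def by (intro Bochner_Integration.integrable_add)
  have "measure_pmf.expectation G (\<lambda>k. r * (if real k > b then 1 else 0 :: real)) = r * tail G b"
    by (simp only: Bochner_Integration.integral_mult_right_zero expectation_indicator_gt)
  then show "measure_pmf.expectation G f
           = tail G a + r * tail G b + c * mean_above G x + d * (measure_pmf.expectation G real + \<delta>)"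
    unfolding f_def using int_terms int
    by (simp add: Bochner_Integration.integral_add Bochner_Integration.integrable_add
        expectation_indicator_gt mean_above_def measure_pmf.integrable_const)
qed

lemma expectation_lower_bound_terms:
  fixes e a c x :: real
  assumes int: "integrable (measure_pmf G) real"
  defines "f \<equiv> \<lambda>k. e * (if real k > a then 1 else 0) + c * (real k * (if real k \<le> x then 1 else 0))"
  shows "integrable (measure_pmf G) f"
    and "measure_pmf.expectation G f = e * tail G a + c * (measure_pmf.expectation G real - mean_above G x)"
proof -
  have int_terms: "integrable (measure_pmf G) (\<lambda>k. e * (if real k > a then 1 else 0 :: real))"
    "integrable (measure_pmf G) (\<lambda>k. c * (real k * (if real k \<le> x then 1 else 0)))"
    by (intro Bochner_Integration.integrable_mult_right integrable_indicator_gt integrable_mean_below int)+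
  then show "integrable (measure_pmf G) f"
    unfolding f_def by (intro Bochner_Integration.integrable_add)
  show "measure_pmf.expectation G f = e * tail G a + c * (measure_pmf.expectation G real - mean_above G x)"
    unfolding f_def using int_terms
    by (simp only: Bochner_Integration.integral_add Bochner_Integration.integral_mult_right_zero
        expectation_indicator_gt mean_below_eq[OF int])
qed

subsection \<open>Elementary asymptotics\<close>

lemma filterlim_const_mult_at_top: "(c::real) > 0 \<Longrightarrow> filterlim (\<lambda>y. c * y) at_top at_top"
  by (rule filterlim_tendsto_pos_mult_at_top[OF tendsto_const _ filterlim_ident])

lemma eventually_powr_le_const_mult_powr:
  assumes "a < b" "(c::real) > 0"
  shows "eventually (\<lambda>x::real. x powr a \<le> c * x powr b) at_top"
proof -
  have "((\<lambda>x. x powr (a - b)) \<longlongrightarrow> 0) at_top"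
    using assms by (intro tendsto_neg_powr filterlim_ident) auto
  then have "eventually (\<lambda>x. x powr (a - b) < c) at_top"
    using assms(2) by (simp add: order_tendsto_iff)
  then show ?thesis using eventually_gt_at_top[of 0]
  proof eventually_elim
    case (elim x)
    have "x powr a = x powr (a - b) * x powr b" by (simp add: powr_add[symmetric])
    also have "\<dots> \<le> c * x powr b" using elim by (intro mult_right_mono) auto
    finally show ?case .
  qed
qed

lemma eventually_const_mult_powr_le:
  assumes "b < 0" "c > 0"
  shows "eventually (\<lambda>y::real. K * y powr b \<le> c) at_top"
proof -
  have "((\<lambda>y. K * y powr b) \<longlongrightarrow> K * 0) at_top"
    using assms by (intro tendsto_mult tendsto_const tendsto_neg_powr filterlim_ident)
  then have "eventually (\<lambda>y. K * y powr b < c) at_top" using assms by (intro order_tendstoD) auto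
  then show ?thesis by (auto elim: eventually_mono)
qed

lemma eventually_powr_ge:
  assumes "b > 0"
  shows "eventually (\<lambda>y::real. y powr b \<ge> c) at_top"
  using filterlim_at_top[THEN iffD1, OF real_powr_at_top[OF assms]] by auto

lemma filterlim_minus_powr_at_top:
  assumes "b < 1"
  shows "filterlim (\<lambda>y::real. y - y powr b) at_top at_top"
proof -
  have "eventually (\<lambda>y. y powr b \<le> (1/2) * y powr 1) at_top"
    by (rule eventually_powr_le_const_mult_powr) (use assms in auto)
  then have "eventually (\<lambda>y. (1/2) * y \<le> y - y powr b) at_top"
    using eventually_gt_at_top[of 0] by eventually_elim auto
  from filterlim_at_top_mono[OF filterlim_const_mult_at_top[of "1/2"] this] show ?thesis by simp
qed

lemma filterlim_plus_powr_at_top: "filterlim (\<lambda>y::real. y + y powr b) at_top at_top"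
  by (rule filterlim_at_top_mono[OF filterlim_ident]) auto

lemma exp_le_linear_plus_square_exp: "(u::real) \<ge> 0 \<Longrightarrow> exp u \<le> 1 + u + u^2 * exp u"
proof -
  assume u: "u \<ge> 0"
  have "1 - u \<le> exp (-u)" using exp_ge_add_one_self[of "-u"] by simp
  then have "(1 - u) * exp u \<le> exp (-u) * exp u" by (intro mult_right_mono) auto
  then have a: "exp u - 1 \<le> u * exp u" by (simp add: exp_minus field_simps)
  have "u * (exp u - 1) \<le> u * (u * exp u)" using a u by (intro mult_left_mono) auto
  with a show ?thesis by (simp add: power2_eq_square algebra_simps)
qed

lemma exp_minus_le_quadratic: "(u::real) \<ge> 0 \<Longrightarrow> exp (-u) \<le> 1 - u + u^2"
proof -
  assume u: "u \<ge> 0"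
  have nonneg: "0 \<le> 1 - u + u^2"
  proof -
    have "1 - u + u^2 = (u - 1/2)^2 + 3/4" by (simp add: power2_eq_square algebra_simps)
    then show ?thesis by (metis add_nonneg_nonneg zero_le_power2 zero_le_divide_iff zero_le_numeral)
  qed
  have "1 \<le> 1 + u^2/2 + u^3/2 + u^4/2" using u by simp
  also have "\<dots> = (1 - u + u^2) * (1 + u + u^2/2)"
    by (simp add: field_simps power2_eq_square power3_eq_cube power4_eq_xxxx)
  also have "\<dots> \<le> (1 - u + u^2) * exp u"
    by (rule mult_left_mono[OF exp_lower_Taylor_quadratic[OF u] nonneg])
  finally show ?thesis by (simp add: exp_minus field_simps)
qed

lemma asymp_equiv_of_relative_error:
  fixes f g :: "real \<Rightarrow> real"
  assumes err: "\<And>\<epsilon>. \<epsilon> > 0 \<Longrightarrow> eventually (\<lambda>x. \<bar>f x - g x\<bar> \<le> \<epsilon> * g x) at_top"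
    and pos: "\<And>x. g x > 0"
  shows "f \<sim>[at_top] g"
proof (rule asymp_equivI')
  show "((\<lambda>x. f x / g x) \<longlongrightarrow> 1) at_top"
  proof (rule tendstoI)
    fix e :: real assume e: "e > 0"
    have "eventually (\<lambda>x. \<bar>f x - g x\<bar> \<le> e/2 * g x) at_top" by (rule err) (use e in simp)
    then show "eventually (\<lambda>x. dist (f x / g x) 1 < e) at_top"
    proof eventually_elim
      case (elim x)
      have "dist (f x / g x) 1 = \<bar>f x - g x\<bar> / g x"
        using pos[of x] by (simp add: dist_real_def field_simps abs_div)
      also have "\<dots> \<le> (e/2 * g x) / g x" using elim pos[of x] by (intro divide_right_mono) auto
      also have "\<dots> < e" using pos[of x] e by simp
      finally show ?case .
    qed
  qed
qed

lemma relative_error_transfer_upper: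
  fixes g B \<phi> :: "real \<Rightarrow> real"
  assumes err: "\<And>\<epsilon>. \<epsilon> > 0 \<Longrightarrow> eventually (\<lambda>y. \<bar>g y - B y\<bar> \<le> \<epsilon> * B y) at_top"
    and B_nonneg: "\<And>y. B y \<ge> 0"
    and B_upper: "\<And>\<delta>. \<delta> > 0 \<Longrightarrow> eventually (\<lambda>y. B (\<phi> y) \<le> (1 + \<delta>) * B y) at_top"
    and \<phi>: "filterlim \<phi> at_top at_top"
    and \<delta>: "\<delta> > 0"
  shows "eventually (\<lambda>y. g (\<phi> y) \<le> (1 + \<delta>) * g y) at_top"
proof -
  define \<epsilon> where "\<epsilon> = \<delta> / (4 + \<delta>)"
  have \<epsilon>: "\<epsilon> > 0" "\<epsilon> \<le> 1" "\<epsilon> * (4 + \<delta>) = \<delta>" using \<delta> by (auto simp: \<epsilon>_def field_simps)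
  have factor: "(1 + \<epsilon>) * (1 + \<epsilon>) \<le> (1 + \<delta>) * (1 - \<epsilon>)"
  proof -
    have "(1 + \<delta>) * (1 - \<epsilon>) = 1 + 3 * \<epsilon>" using \<epsilon>(3) by (simp add: algebra_simps)
    moreover have "\<epsilon> * \<epsilon> \<le> \<epsilon> * 1" using \<epsilon> by (intro mult_left_mono) auto
    ultimately show ?thesis by (simp add: algebra_simps)
  qed
  show ?thesis
    using eventually_compose_filterlim[OF err[OF \<epsilon>(1)] \<phi>] err[OF \<epsilon>(1)] B_upper[OF \<epsilon>(1)]
  proof eventually_elim
    case (elim y)
    have "g (\<phi> y) \<le> (1 + \<epsilon>) * B (\<phi> y)" using elim(1) by (simp add: abs_le_iff algebra_simps)
    also have "\<dots> \<le> ((1 + \<epsilon>) * (1 + \<epsilon>)) * B y"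
      using elim(3) \<epsilon> by (simp add: mult_left_mono mult.assoc)
    also have "\<dots> \<le> ((1 + \<delta>) * (1 - \<epsilon>)) * B y" using factor B_nonneg[of y] by (rule mult_right_mono)
    also have "\<dots> = (1 + \<delta>) * ((1 - \<epsilon>) * B y)" by simp
    also have "\<dots> \<le> (1 + \<delta>) * g y"
      using elim(2) \<delta> by (intro mult_left_mono) (simp_all add: abs_le_iff algebra_simps)
    finally show ?case .
  qed
qed

lemma relative_error_transfer_lower:
  fixes g B \<phi> :: "real \<Rightarrow> real"
  assumes err: "\<And>\<epsilon>. \<epsilon> > 0 \<Longrightarrow> eventually (\<lambda>y. \<bar>g y - B y\<bar> \<le> \<epsilon> * B y) at_top"
    and B_nonneg: "\<And>y. B y \<ge> 0"
    and B_lower: "\<And>\<delta>. \<delta> > 0 \<Longrightarrow> eventually (\<lambda>y. B (\<phi> y) \<ge> (1 - \<delta>) * B y) at_top"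
    and \<phi>: "filterlim \<phi> at_top at_top"
    and \<delta>: "\<delta> > 0"
  shows "eventually (\<lambda>y. g (\<phi> y) \<ge> (1 - \<delta>) * g y) at_top"
proof -
  define \<epsilon> where "\<epsilon> = \<delta> / (4 + \<delta>)"
  have \<epsilon>: "\<epsilon> > 0" "\<epsilon> \<le> 1" "\<epsilon> * (4 + \<delta>) = \<delta>" using \<delta> by (auto simp: \<epsilon>_def field_simps)
  have factor: "(1 - \<delta>) * (1 + \<epsilon>) \<le> (1 - \<epsilon>) * (1 - \<epsilon>)"
  proof -
    have "(1 - \<epsilon>) * (1 - \<epsilon>) - (1 - \<delta>) * (1 + \<epsilon>) = \<epsilon> + \<epsilon> * \<epsilon> + 2 * (\<delta> * \<epsilon>)"
      using \<epsilon>(3) by (simp add: algebra_simps)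
    then show ?thesis using \<epsilon> \<delta> by (smt (verit) mult_nonneg_nonneg)
  qed
  show ?thesis
    using eventually_compose_filterlim[OF err[OF \<epsilon>(1)] \<phi>] err[OF \<epsilon>(1)] B_lower[OF \<epsilon>(1)]
  proof eventually_elim
    case (elim y)
    have g_lower: "(1 - \<epsilon>) * B y \<le> g y" and g_upper: "g y \<le> (1 + \<epsilon>) * B y"
      using elim(2) by (simp_all add: abs_le_iff algebra_simps)
    have shifted: "(1 - \<epsilon>) * ((1 - \<epsilon>) * B y) \<le> g (\<phi> y)"
    proof -
      have "(1 - \<epsilon>) * ((1 - \<epsilon>) * B y) \<le> (1 - \<epsilon>) * B (\<phi> y)"
        using elim(3) \<epsilon> by (intro mult_left_mono) auto
      also have "\<dots> \<le> g (\<phi> y)" using elim(1) by (simp add: abs_le_iff algebra_simps)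
      finally show ?thesis .
    qed
    show ?case
    proof (cases "\<delta> \<le> 1")
      case False
      have "0 \<le> g y" using g_lower \<epsilon> B_nonneg[of y] by (smt (verit) mult_nonneg_nonneg)
      moreover have "0 \<le> (1 - \<epsilon>) * ((1 - \<epsilon>) * B y)" using \<epsilon> B_nonneg[of y] by simp
      ultimately show ?thesis using False shifted by (smt (verit) mult_nonpos_nonneg)
    next
      case True
      have "(1 - \<delta>) * g y \<le> ((1 - \<delta>) * (1 + \<epsilon>)) * B y"
        using mult_left_mono[OF g_upper, of "1 - \<delta>"] True by simp
      also have "\<dots> \<le> ((1 - \<epsilon>) * (1 - \<epsilon>)) * B y" using factor B_nonneg[of y] by (rule mult_right_mono)
      finally show ?thesis using shifted by simp
    qed
  qed
qed

lemma relative_error_transfer_half: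
  fixes g B :: "real \<Rightarrow> real"
  assumes err: "\<And>\<epsilon>. \<epsilon> > 0 \<Longrightarrow> eventually (\<lambda>y. \<bar>g y - B y\<bar> \<le> \<epsilon> * B y) at_top"
    and B_half: "\<And>y. B (y/2) \<le> C * B y" and C: "C \<ge> 0"
  shows "eventually (\<lambda>y. g (y/2) \<le> (3 * C) * g y) at_top"
proof -
  have half: "filterlim (\<lambda>y::real. y / 2) at_top at_top"
    using filterlim_const_mult_at_top[of "1/2"] by simp
  have \<epsilon>: "(1/2::real) > 0" by simp
  show ?thesis using eventually_compose_filterlim[OF err[OF \<epsilon>] half] err[OF \<epsilon>]
  proof eventually_elim
    case (elim y)
    have "g (y/2) \<le> (3/2) * B (y/2)" using elim(1) unfolding abs_le_iff by linarith
    also have "\<dots> \<le> (3/2) * (C * B y)" using B_half[of y] by simp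
    also have "\<dots> \<le> (3/2) * (C * (2 * g y))"
      using elim(2) C unfolding abs_le_iff by (intro mult_left_mono) auto
    finally show ?case by (simp add: algebra_simps)
  qed
qed

subsection \<open>Chernoff-type bounds for sums of i.i.d.\ variables\<close>

definition trunc_mgf :: "nat pmf \<Rightarrow> real \<Rightarrow> real \<Rightarrow> real" where
  "trunc_mgf F l h = measure_pmf.expectation F (\<lambda>a. if real a \<le> h then exp (l * real a) else 0)"

definition laplace :: "nat pmf \<Rightarrow> real \<Rightarrow> real" where
  "laplace F l = measure_pmf.expectation F (\<lambda>a. exp (- l * real a))"

lemma trunc_mgf_nonneg: "trunc_mgf F l h \<ge> 0"
  unfolding trunc_mgf_def by (rule integral_nonneg_AE) auto

lemma laplace_nonneg: "laplace F l \<ge> 0"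
  unfolding laplace_def by (rule integral_nonneg_AE) auto

lemma integrable_trunc_exp:
  "l \<ge> 0 \<Longrightarrow> integrable (measure_pmf F) (\<lambda>a. if real a \<le> h then exp (l * real a) else 0)"
  by (rule integrable_measure_pmf_bounded[where B="exp (l * max h 0)"]) (auto intro: mult_left_mono)

lemma integrable_exp_minus:
  "l \<ge> 0 \<Longrightarrow> integrable (measure_pmf F) (\<lambda>a. exp (- l * real a))"
  by (rule integrable_measure_pmf_bounded[where B=1]) auto

text \<open>
  Summands above the truncation level \<open>h\<close> are handled by the union bound, the truncated
  ones by the exponential Markov inequality.
\<close>
lemma tail_conv_pow_le_trunc_mgf:
  assumes l: "l \<ge> 0"
  shows "tail (conv_pow F k) t \<le> real k * tail F h + exp (- l * t) * trunc_mgf F l h ^ k"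
proof (induction k arbitrary: t)
  case 0
  have "t < 0 \<Longrightarrow> 1 \<le> exp (- l * t)" using l by (simp add: mult_nonneg_nonpos)
  then show ?case unfolding tail_conv_pow_0 by simp
next
  case (Suc k)
  let ?M = "trunc_mgf F l h"
  let ?b = "\<lambda>a. (if real a > h then 1 else 0) + real k * tail F h +
              exp (- l * t) * ?M ^ k * (if real a \<le> h then exp (l * real a) else 0)"
  have pointwise: "tail (conv_pow F k) (t - real a) \<le> ?b a" for a
  proof (cases "real a > h")
    case True
    then show ?thesis
      using tail_le_one[of "conv_pow F k" "t - real a"] tail_nonneg[of F h]
      by (simp add: add_increasing2)
  next
    case False
    have "exp (- l * (t - real a)) = exp (- l * t) * exp (l * real a)"
      by (simp add: exp_add[symmetric] algebra_simps)
    then show ?thesis using Suc[of "t - real a"] False by (simp add: algebra_simps)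
  qed
  have int_trunc: "integrable (measure_pmf F)
      (\<lambda>a. exp (- l * t) * ?M ^ k * (if real a \<le> h then exp (l * real a) else 0))"
    by (intro Bochner_Integration.integrable_mult_right integrable_trunc_exp l)
  have "tail (conv_pow F (Suc k)) t \<le> measure_pmf.expectation F ?b"
    unfolding tail_conv_pow_Suc
    by (intro integral_mono integrable_tail_comp pointwise Bochner_Integration.integrable_add
        integrable_indicator_gt int_trunc measure_pmf.integrable_const)
  also have "\<dots> = tail F h + real k * tail F h + exp (- l * t) * ?M ^ k * ?M"
    using int_trunc integrable_indicator_gt
    by (simp add: Bochner_Integration.integral_add expectation_indicator_gt trunc_mgf_def)
  also have "\<dots> = real (Suc k) * tail F h + exp (- l * t) * ?M ^ Suc k"
    by (simp add: algebra_simps)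
  finally show ?case .
qed

lemma one_minus_tail_conv_pow_le_laplace:
  assumes l: "l \<ge> 0"
  shows "1 - tail (conv_pow F k) t \<le> exp (l * t) * laplace F l ^ k"
proof (induction k arbitrary: t)
  case 0
  show ?case unfolding tail_conv_pow_0 using l by simp
next
  case (Suc k)
  have "1 - tail (conv_pow F (Suc k)) t =
        measure_pmf.expectation F (\<lambda>a. 1 - tail (conv_pow F k) (t - real a))"
    unfolding tail_conv_pow_Suc
    by (simp add: Bochner_Integration.integral_diff[OF measure_pmf.integrable_const integrable_tail_comp])
  also have "\<dots> \<le> measure_pmf.expectation F (\<lambda>a. exp (l * t) * laplace F l ^ k * exp (- l * real a))"
  proof (intro integral_mono Bochner_Integration.integrable_diff measure_pmf.integrable_const
      integrable_tail_comp Bochner_Integration.integrable_mult_right integrable_exp_minus l)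
    fix a
    have "exp (l * (t - real a)) = exp (l * t) * exp (- l * real a)"
      by (simp add: exp_add[symmetric] algebra_simps)
    then show "1 - tail (conv_pow F k) (t - real a) \<le> exp (l * t) * laplace F l ^ k * exp (- l * real a)"
      using Suc[of "t - real a"] by (simp add: algebra_simps)
  qed
  also have "\<dots> = exp (l * t) * laplace F l ^ Suc k"
    by (simp add: laplace_def)
  finally show ?case .
qed

lemma tail_conv_pow_ge:
  "tail (conv_pow F k) t \<ge> real k * tail F t * (1 - real k * tail F t)"
proof (induction k)
  case 0
  then show ?case by (simp add: tail_nonneg)
next
  case (Suc k)
  let ?T = "tail F t" and ?q = "tail (conv_pow F k) t"
  let ?b = "\<lambda>a. (if real a > t then 1 else 0) + (if real a \<le> t then 1 else 0) * ?q"
  have int_le: "integrable (measure_pmf F) (\<lambda>a. if real a \<le> t then 1 else 0::real)"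
    by (rule integrable_measure_pmf_bounded[where B=1]) auto
  have "measure_pmf.expectation F ?b \<le> tail (conv_pow F (Suc k)) t"
    unfolding tail_conv_pow_Suc
  proof (intro integral_mono Bochner_Integration.integrable_add integrable_indicator_gt
      Bochner_Integration.integrable_mult_left int_le integrable_tail_comp)
    fix a
    show "?b a \<le> tail (conv_pow F k) (t - real a)"
      by (cases "real a > t") (simp_all add: tail_negative tail_antimono)
  qed
  moreover have "measure_pmf.expectation F ?b = ?T + (1 - ?T) * ?q"
    using integrable_indicator_gt int_le
    by (simp add: Bochner_Integration.integral_add expectation_indicator_gt expectation_indicator_le)
  moreover have "(1 - ?T) * (real k * ?T * (1 - real k * ?T)) \<le> (1 - ?T) * ?q"
    using Suc tail_le_one[of F t] by (intro mult_left_mono) auto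
  moreover have "?T + (1 - ?T) * (real k * ?T * (1 - real k * ?T)) - real (Suc k) * ?T * (1 - real (Suc k) * ?T)
       = (real k + 1) * ?T^2 + (real k)^2 * ?T^3"
    by (simp add: algebra_simps power2_eq_square power3_eq_cube)
  moreover have "(real k + 1) * ?T^2 + (real k)^2 * ?T^3 \<ge> 0"
    using tail_nonneg[of F t] by simp
  ultimately show ?case by linarith
qed

subsection \<open>The offspring law\<close>

lemma real_le_square: "real (k::nat) \<le> (real k)^2"
  by (metis of_nat_le_iff of_nat_mult le_square power2_eq_square)

locale gw_heavy_tail =
  fixes F :: "nat pmf" and \<gamma> :: real
  assumes mean_gt1: "offspring_mean F > 1"
    and second_moment: "integrable (measure_pmf F) (\<lambda>k. (real k)^2)"
    and dominated: "\<exists>C. \<forall>x. tail F (x / 2) \<le> C * tail F x"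
    and gamma: "\<gamma> > 1/2"
    and insensitive: "(\<lambda>x. tail F (x + x powr \<gamma>)) \<sim>[at_top] tail F"
begin

abbreviation T where "T \<equiv> tail F"
abbreviation m where "m \<equiv> offspring_mean F"

definition m2 where "m2 = measure_pmf.expectation F (\<lambda>k. (real k)^2)"

lemma integrable_offspring: "integrable (measure_pmf F) real"
  by (rule Bochner_Integration.integrable_bound[OF second_moment])
     (auto intro!: AE_pmfI simp: power2_eq_square real_le_square[unfolded power2_eq_square])

lemma mean_eq: "m = measure_pmf.expectation F real"
  by (simp add: offspring_mean_def)

lemma mean_pos: "m > 0"
  using mean_gt1 by simp

lemma m2_ge_mean: "m \<le> m2"
  unfolding mean_eq m2_def by (rule integral_mono[OF integrable_offspring second_moment real_le_square])

lemma m2_pos: "m2 > 0"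
  using m2_ge_mean mean_pos by simp

lemma tail_le_mean_div: "x > 0 \<Longrightarrow> T x \<le> m / x"
proof -
  assume x: "x > 0"
  have "T x \<le> measure_pmf.prob F {k \<in> space (measure_pmf F). real k \<ge> x}"
    unfolding tail_def by (intro measure_pmf.finite_measure_mono) auto
  also have "\<dots> \<le> measure_pmf.expectation F real / x"
    by (rule integral_Markov_inequality_measure[OF integrable_offspring]) (use x in auto)
  finally show ?thesis by (simp add: mean_eq)
qed

lemma tail_le_m2_div: "x > 0 \<Longrightarrow> T x \<le> m2 / x^2"
proof -
  assume x: "x > 0"
  have "T x \<le> measure_pmf.prob F {k \<in> space (measure_pmf F). (real k)^2 \<ge> x^2}"
    unfolding tail_def using x by (intro measure_pmf.finite_measure_mono) (auto intro: power_mono)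
  also have "\<dots> \<le> measure_pmf.expectation F (\<lambda>k. (real k)^2) / x^2"
    by (rule integral_Markov_inequality_measure[OF second_moment]) (use x in auto)
  finally show ?thesis by (simp add: m2_def)
qed

lemma tail_tendsto_0: "(T \<longlongrightarrow> 0) at_top"
proof (rule Lim_null_comparison)
  show "eventually (\<lambda>x. norm (T x) \<le> m / x) at_top"
    using eventually_gt_at_top[of 0] by eventually_elim (simp add: tail_nonneg tail_le_mean_div)
  show "((\<lambda>x. m / x) \<longlongrightarrow> 0) at_top"
    by (intro tendsto_divide_0[OF tendsto_const] filterlim_at_top_imp_at_infinity filterlim_ident)
qed

lemma eventually_tail_le: "\<delta> > 0 \<Longrightarrow> eventually (\<lambda>t. T t \<le> \<delta>) at_top"
  using order_tendstoD(2)[OF tail_tendsto_0, of \<delta>] by (auto elim: eventually_mono)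

text \<open>
  Since \<open>m > 0\<close>, the offspring law is not concentrated at \<open>0\<close>, so \<open>T (1/2) > 0\<close>; dominated
  variation propagates positivity to every \<open>T x\<close>.
\<close>
lemma tail_pos: "T x > 0"
proof -
  have T_half: "T (1/2) > 0"
  proof (rule ccontr)
    assume "\<not> T (1/2) > 0"
    then have zero: "T (1/2) = 0" using tail_nonneg[of F "1/2"] by linarith
    have "k = 0" if "k \<in> set_pmf F" for k
    proof (rule ccontr)
      assume "k \<noteq> 0"
      then have "pmf F k \<le> T (1/2)"
        unfolding tail_def measure_pmf_single[symmetric]
        by (intro measure_pmf.finite_measure_mono) auto
      with zero that show False by (simp add: set_pmf_eq pmf_nonneg)
    qed
    then have "measure_pmf.expectation F real = measure_pmf.expectation F (\<lambda>_. 0)"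
      by (intro integral_cong_AE) (auto intro!: AE_pmfI)
    then show False using mean_pos by (simp add: mean_eq)
  qed
  obtain C where C: "\<And>x. T (x/2) \<le> C * T x" using dominated by auto
  show ?thesis
  proof (rule ccontr)
    assume "\<not> T x > 0"
    then have "T x = 0" using tail_nonneg[of F x] by linarith
    then have zero: "T (x / 2^j) = 0" for j
    proof (induction j)
      case (Suc j)
      have "T (x / 2^Suc j) \<le> C * T (x / 2^j)" using C[of "x / 2^j"] by (simp add: field_simps)
      then show ?case using Suc tail_nonneg[of F "x / 2^Suc j"] by simp
    qed simp
    obtain j where "\<bar>x\<bar> * 2 < 2^j" using real_arch_pow[of 2 "\<bar>x\<bar> * 2"] by auto
    then have "T (1/2) \<le> T (x / 2^j)" by (intro tail_antimono) (simp add: field_simps)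
    with zero T_half show False by simp
  qed
qed

definition dom_const where "dom_const = max 1 (SOME C. \<forall>x. T (x / 2) \<le> C * T x)"

lemma dom_const_ge_1: "dom_const \<ge> 1"
  by (simp add: dom_const_def)

lemma tail_half_le: "T (x / 2) \<le> dom_const * T x"
proof -
  have "T (x/2) \<le> (SOME C. \<forall>x. T (x / 2) \<le> C * T x) * T x"
    using someI_ex[OF dominated] by blast
  also have "\<dots> \<le> dom_const * T x"
    unfolding dom_const_def by (intro mult_right_mono) (auto simp: tail_nonneg)
  finally show ?thesis .
qed

lemma tail_div_pow2_le: "T (x / 2^j) \<le> dom_const^j * T x"
proof (induction j)
  case (Suc j)
  have "T (x / 2^Suc j) = T ((x / 2^j) / 2)" by (simp add: field_simps)
  also have "\<dots> \<le> dom_const * T (x / 2^j)" by (rule tail_half_le)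
  also have "\<dots> \<le> dom_const * (dom_const^j * T x)"
    using Suc dom_const_ge_1 by (intro mult_left_mono) auto
  finally show ?case by simp
qed simp

definition dom_index where "dom_index = log 2 dom_const"

lemma dom_index_nonneg: "dom_index \<ge> 0"
  using dom_const_ge_1 by (simp add: dom_index_def)

lemma tail_ge_powr: "x \<ge> 1 \<Longrightarrow> T x \<ge> (T 1 / dom_const) * x powr (- dom_index)"
proof -
  assume x: "x \<ge> 1"
  define j where "j = nat \<lceil>log 2 x\<rceil>"
  have log_x: "log 2 x \<ge> 0" using x by simp
  have j: "log 2 x \<le> real j" "real j \<le> log 2 x + 1" unfolding j_def using log_x by linarith+
  have "x = 2 powr log 2 x" using x by simp
  also have "\<dots> \<le> 2 powr real j" using j(1) by (intro powr_mono) auto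
  finally have x_le: "x \<le> 2^j" by (simp add: powr_realpow)
  have "T 1 = T ((2^j) / 2^j)" by simp
  also have "\<dots> \<le> dom_const^j * T (2^j)" by (rule tail_div_pow2_le)
  also have "\<dots> \<le> dom_const^j * T x"
    using x_le dom_const_ge_1 by (intro mult_left_mono tail_antimono) auto
  finally have T1: "T 1 \<le> dom_const^j * T x" .
  have "dom_const^j = dom_const powr real j" using dom_const_ge_1 by (simp add: powr_realpow)
  also have "\<dots> \<le> dom_const powr (log 2 x + 1)" using dom_const_ge_1 j(2) by (intro powr_mono) auto
  also have "\<dots> = dom_const * x powr dom_index"
  proof -
    have "dom_const powr (log 2 x) = x powr dom_index"
      unfolding dom_index_def using x dom_const_ge_1 by (simp add: powr_def log_def field_simps)
    then show ?thesis using dom_const_ge_1 by (simp add: powr_add)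
  qed
  finally have "T 1 \<le> dom_const * x powr dom_index * T x"
    using T1 tail_nonneg[of F x] by (meson mult_right_mono order_trans)
  then show ?thesis using dom_const_ge_1 x by (simp add: powr_minus field_simps)
qed

lemma integrable_offspring_square_mult: "integrable (measure_pmf F) (\<lambda>a. c * (real a)^2)"
  by (intro Bochner_Integration.integrable_mult_right second_moment)

lemma integrable_offspring_mult: "integrable (measure_pmf F) (\<lambda>a. c * real a)"
  by (intro Bochner_Integration.integrable_mult_right integrable_offspring)

lemma expectation_quadratic: "measure_pmf.expectation F (\<lambda>a. 1 + b * real a + c * (real a)^2) = 1 + b * m + c * m2"
  using integrable_offspring_square_mult integrable_offspring_mult
  by (simp add: Bochner_Integration.integral_add measure_pmf.integrable_const m2_def mean_eq)

lemma trunc_mgf_le: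
  assumes l: "l \<ge> 0"
  shows "trunc_mgf F l h \<le> exp (l * m + l^2 * m2 * exp (l * h))"
proof -
  let ?g = "\<lambda>a. 1 + l * real a + (l^2 * exp (l * h)) * (real a)^2"
  have pointwise: "(if real a \<le> h then exp (l * real a) else 0) \<le> ?g a" for a
  proof (cases "real a \<le> h")
    case True
    have "exp (l * real a) \<le> 1 + l * real a + (l * real a)^2 * exp (l * real a)"
      by (rule exp_le_linear_plus_square_exp) (use l in simp)
    also have "(l * real a)^2 * exp (l * real a) \<le> (l * real a)^2 * exp (l * h)"
      using True l by (intro mult_left_mono) (auto intro: mult_left_mono)
    finally show ?thesis using True by (simp add: power_mult_distrib algebra_simps)
  next
    case False
    then show ?thesis using l by (simp add: add_nonneg_nonneg)
  qed
  have "trunc_mgf F l h \<le> measure_pmf.expectation F ?g"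
    unfolding trunc_mgf_def
    by (intro integral_mono integrable_trunc_exp l pointwise Bochner_Integration.integrable_add
        integrable_offspring_square_mult integrable_offspring_mult measure_pmf.integrable_const)
  also have "\<dots> = 1 + l * m + l^2 * exp (l * h) * m2"
    by (rule expectation_quadratic)
  also have "\<dots> \<le> exp (l * m + l^2 * m2 * exp (l * h))"
    using exp_ge_add_one_self[of "l * m + l^2 * m2 * exp (l * h)"] by (simp add: algebra_simps)
  finally show ?thesis .
qed

lemma laplace_le:
  assumes l: "l \<ge> 0"
  shows "laplace F l \<le> exp (- l * m + l^2 * m2)"
proof -
  have "laplace F l \<le> measure_pmf.expectation F (\<lambda>a. 1 + (- l) * real a + l^2 * (real a)^2)"
    unfolding laplace_def
  proof (intro integral_mono integrable_exp_minus l Bochner_Integration.integrable_add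
      integrable_offspring_square_mult integrable_offspring_mult measure_pmf.integrable_const)
    fix a
    have "exp (- (l * real a)) \<le> 1 - l * real a + (l * real a)^2"
      by (rule exp_minus_le_quadratic) (use l in simp)
    then show "exp (- l * real a) \<le> 1 + (- l) * real a + l^2 * (real a)^2"
      by (simp add: power_mult_distrib)
  qed
  also have "\<dots> = 1 - l * m + l^2 * m2"
    using expectation_quadratic[of "- l" "l^2"] by simp
  also have "\<dots> \<le> exp (- l * m + l^2 * m2)"
    using exp_ge_add_one_self[of "- l * m + l^2 * m2"] by (simp add: algebra_simps)
  finally show ?thesis .
qed

lemma tail_conv_pow_chernoff_upper:
  assumes l: "l \<ge> 0"
  shows "tail (conv_pow F k) t \<le> real k * T h + exp (- l * t + real k * (l * m + l^2 * m2 * exp (l * h)))"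
proof -
  have "trunc_mgf F l h ^ k \<le> exp (l * m + l^2 * m2 * exp (l * h)) ^ k"
    by (intro power_mono trunc_mgf_le trunc_mgf_nonneg l)
  then have "exp (- l * t) * trunc_mgf F l h ^ k
      \<le> exp (- l * t) * exp (real k * (l * m + l^2 * m2 * exp (l * h)))"
    by (simp add: exp_of_nat_mult)
  then show ?thesis
    using tail_conv_pow_le_trunc_mgf[OF l, of F k t h] by (simp add: exp_add[symmetric])
qed

lemma tail_conv_pow_chernoff_lower:
  assumes l: "l \<ge> 0"
  shows "1 - tail (conv_pow F k) t \<le> exp (l * t - real k * l * m + real k * l^2 * m2)"
proof -
  have "laplace F l ^ k \<le> exp (- l * m + l^2 * m2) ^ k"
    by (intro power_mono laplace_le laplace_nonneg l)
  then have "exp (l * t) * laplace F l ^ k \<le> exp (l * t) * exp (real k * (- l * m + l^2 * m2))"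
    by (simp add: exp_of_nat_mult)
  then show ?thesis using one_minus_tail_conv_pow_le_laplace[OF l, of F k t]
    by (simp add: exp_add[symmetric] algebra_simps)
qed

subsection \<open>Insensitivity\<close>

text \<open>The argument shifts by \<open>y\<^sup>\<beta>\<close>; \<open>\<beta>'\<close> and \<open>\<beta>''\<close> leave room on either side of \<open>\<beta>\<close>.\<close>
definition \<beta> where "\<beta> = (1/2 + min \<gamma> 1) / 2"
definition \<beta>' where "\<beta>' = (1/2 + \<beta>) / 2"
definition \<beta>'' where "\<beta>'' = (\<beta> + min \<gamma> 1) / 2"

lemma exponents: "1/2 < \<beta>'" "\<beta>' < \<beta>" "\<beta> < \<beta>''" "\<beta>'' < 1" "\<beta>'' < \<gamma>" "\<beta> < 1" "\<beta> < \<gamma>"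
  using gamma by (auto simp: \<beta>_def \<beta>'_def \<beta>''_def min_def field_simps)

lemma eventually_tail_shift_ge:
  assumes "\<delta> > 0"
  shows "eventually (\<lambda>x. T (x + x powr \<gamma>) \<ge> (1 - \<delta>) * T x) at_top"
proof -
  have "((\<lambda>x. T (x + x powr \<gamma>) / T x) \<longlongrightarrow> 1) at_top"
    using asymp_equivD[OF insensitive] by (simp add: less_imp_neq[OF tail_pos, symmetric])
  then have "eventually (\<lambda>x. T (x + x powr \<gamma>) / T x > 1 - \<delta>) at_top"
    using assms by (intro order_tendstoD) auto
  then show ?thesis
    by eventually_elim (use pos_less_divide_eq[OF tail_pos] in \<open>simp add: less_imp_le\<close>)
qed

lemma eventually_tail_shift_down_le:
  assumes \<delta>: "\<delta> > 0"
  shows "eventually (\<lambda>u. T (u - u powr \<beta>'') \<le> (1 + \<delta>) * T u) at_top"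
proof -
  define d where "d = \<delta> / (1 + \<delta>)"
  have d: "d > 0" "d < 1" using \<delta> by (auto simp: d_def)
  have shift: "filterlim (\<lambda>u. u - u powr \<beta>'') at_top at_top"
    by (rule filterlim_minus_powr_at_top) (use exponents in auto)
  have e1: "eventually (\<lambda>u. u powr \<beta>'' \<le> (1/2) * u powr 1) at_top"
    by (rule eventually_powr_le_const_mult_powr) (use exponents in auto)
  have e2: "eventually (\<lambda>u. u powr \<beta>'' \<le> (1/2) powr \<gamma> * u powr \<gamma>) at_top"
    by (rule eventually_powr_le_const_mult_powr) (use exponents in auto)
  show ?thesis
    using eventually_compose_filterlim[OF eventually_tail_shift_ge[OF d(1)] shift] e1 e2
      eventually_gt_at_top[of 0]
  proof eventually_elim
    case (elim u)
    let ?v = "u - u powr \<beta>''"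
    have v: "?v \<ge> u / 2" using elim by simp
    have "(1/2) powr \<gamma> * u powr \<gamma> = (u/2) powr \<gamma>" using elim by (simp add: powr_mult[symmetric])
    also have "\<dots> \<le> ?v powr \<gamma>" using v elim gamma by (intro powr_mono2) auto
    finally have "u \<le> ?v + ?v powr \<gamma>" using elim by simp
    then have "(1 - d) * T ?v \<le> T u" using elim(1) tail_antimono by (meson order_trans)
    then have "T ?v \<le> T u / (1 - d)" using d by (simp add: field_simps)
    also have "T u / (1 - d) = (1 + \<delta>) * T u" using \<delta> by (simp add: d_def field_simps)
    finally show ?case .
  qed
qed

lemma eventually_tail_scaled_shift_down_le:
  assumes \<delta>: "\<delta> > 0" and c: "c > 0"
  shows "eventually (\<lambda>y. T (c * (y - y powr \<beta>)) \<le> (1 + \<delta>) * T (c * y)) at_top"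
proof -
  have e1: "eventually (\<lambda>y. T (c * y - (c * y) powr \<beta>'') \<le> (1 + \<delta>) * T (c * y)) at_top"
    by (rule eventually_compose_filterlim[OF eventually_tail_shift_down_le[OF \<delta>] filterlim_const_mult_at_top[OF c]])
  have e2: "eventually (\<lambda>y. y powr \<beta> \<le> c powr (\<beta>'' - 1) * y powr \<beta>'') at_top"
    by (rule eventually_powr_le_const_mult_powr) (use exponents c in auto)
  show ?thesis using e1 e2 eventually_gt_at_top[of 0]
  proof eventually_elim
    case (elim y)
    have "c * y powr \<beta> \<le> c * (c powr (\<beta>'' - 1) * y powr \<beta>'')" using elim c by (intro mult_left_mono) auto
    also have "\<dots> = (c * y) powr \<beta>''" using c elim by (simp add: powr_mult powr_diff field_simps)
    finally have "c * y - (c * y) powr \<beta>'' \<le> c * (y - y powr \<beta>)" by (simp add: algebra_simps)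
    then show ?case using elim(1) tail_antimono by (meson order_trans)
  qed
qed

lemma eventually_tail_scaled_shift_up_ge:
  assumes \<delta>: "\<delta> > 0" and c: "c > 0"
  shows "eventually (\<lambda>y. T (c * (y + y powr \<beta>)) \<ge> (1 - \<delta>) * T (c * y)) at_top"
proof -
  have e1: "eventually (\<lambda>y. T (c * y + (c * y) powr \<gamma>) \<ge> (1 - \<delta>) * T (c * y)) at_top"
    by (rule eventually_compose_filterlim[OF eventually_tail_shift_ge[OF \<delta>] filterlim_const_mult_at_top[OF c]])
  have e2: "eventually (\<lambda>y. y powr \<beta> \<le> c powr (\<gamma> - 1) * y powr \<gamma>) at_top"
    by (rule eventually_powr_le_const_mult_powr) (use exponents c in auto)
  show ?thesis using e1 e2 eventually_gt_at_top[of 0]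
  proof eventually_elim
    case (elim y)
    have "c * y powr \<beta> \<le> c * (c powr (\<gamma> - 1) * y powr \<gamma>)" using elim c by (intro mult_left_mono) auto
    also have "\<dots> = (c * y) powr \<gamma>" using c elim by (simp add: powr_mult powr_diff field_simps)
    finally have "c * (y + y powr \<beta>) \<le> c * y + (c * y) powr \<gamma>" by (simp add: algebra_simps)
    then show ?case using elim(1) tail_antimono by (meson order_trans)
  qed
qed

subsection \<open>Tails of sums of offspring\<close>

lemma tail_conv_pow_Suc_le:
  "tail (conv_pow F (Suc k)) t \<le> tail (conv_pow F k) (t - t powr \<beta>) + T (t powr \<beta>) * tail (conv_pow F k) (t/2)
     + T (t/2) * tail (conv_pow F k) (t powr \<beta>) + T (t - t powr \<beta>)"
proof -
  let ?q = "tail (conv_pow F k)"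
  define f2 where "f2 = (\<lambda>a. (if real a > t powr \<beta> then 1 else 0) * ?q (t/2))"
  define f3 where "f3 = (\<lambda>a. (if real a > t/2 then 1 else 0) * ?q (t powr \<beta>))"
  define f4 where "f4 = (\<lambda>a. (if real a > t - t powr \<beta> then 1 else (0::real)))"
  let ?b = "\<lambda>a. ?q (t - t powr \<beta>) + f2 a + f3 a + f4 a"
  have pointwise: "?q (t - real a) \<le> ?b a" for a
  proof -
    have nonneg: "0 \<le> ?q (t - t powr \<beta>)" "0 \<le> f2 a" "0 \<le> f3 a" "0 \<le> f4 a"
      by (auto simp: tail_nonneg f2_def f3_def f4_def)
    consider "real a \<le> t powr \<beta>" | "t powr \<beta> < real a" "real a \<le> t/2"
      | "t/2 < real a" "real a \<le> t - t powr \<beta>" | "real a > t - t powr \<beta>"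
      by linarith
    then show ?thesis
    proof cases
      case 1
      then have "?q (t - real a) \<le> ?q (t - t powr \<beta>)" by (intro tail_antimono) auto
      then show ?thesis using nonneg by linarith
    next
      case 2
      then have "?q (t - real a) \<le> ?q (t/2)" by (intro tail_antimono) auto
      then show ?thesis using nonneg 2 by (simp add: f2_def)
    next
      case 3
      then have "?q (t - real a) \<le> ?q (t powr \<beta>)" by (intro tail_antimono) auto
      then show ?thesis using nonneg 3 by (simp add: f3_def)
    next
      case 4
      then show ?thesis using nonneg tail_le_one[of "conv_pow F k" "t - real a"] by (simp add: f4_def)
    qed
  qed
  have int: "integrable (measure_pmf F) f2" "integrable (measure_pmf F) f3" "integrable (measure_pmf F) f4"
    unfolding f2_def f3_def f4_def
    by (intro Bochner_Integration.integrable_mult_left integrable_indicator_gt)+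
  have "tail (conv_pow F (Suc k)) t \<le> measure_pmf.expectation F ?b"
    unfolding tail_conv_pow_Suc
    by (intro integral_mono integrable_tail_comp pointwise Bochner_Integration.integrable_add
        measure_pmf.integrable_const int)
  also have "\<dots> = ?q (t - t powr \<beta>) + T (t powr \<beta>) * ?q (t/2) + T (t/2) * ?q (t powr \<beta>) + T (t - t powr \<beta>)"
  proof -
    have "measure_pmf.expectation F f2 = T (t powr \<beta>) * ?q (t/2)"
      "measure_pmf.expectation F f3 = T (t/2) * ?q (t powr \<beta>)"
      "measure_pmf.expectation F f4 = T (t - t powr \<beta>)"
      unfolding f2_def f3_def f4_def by (rule expectation_indicator_gt_mult expectation_indicator_gt)+
    then show ?thesis using int
      by (simp only: Bochner_Integration.integral_add Bochner_Integration.integrable_add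
          measure_pmf.integrable_const measure_pmf.prob_space integral_const) simp
  qed
  finally show ?thesis .
qed

lemma eventually_tail_conv_pow_le:
  "\<delta> > 0 \<Longrightarrow> eventually (\<lambda>t. tail (conv_pow F k) t \<le> (real k + \<delta>) * T t) at_top"
proof (induction k arbitrary: \<delta>)
  case 0
  show ?case using eventually_ge_at_top[of 0]
    by eventually_elim (use 0 tail_nonneg in \<open>auto simp: tail_conv_pow_0[unfolded conv_pow.simps]\<close>)
next
  case (Suc k)
  let ?q = "tail (conv_pow F k)" and ?C = "dom_const"
  define K where "K = real k + 3 + (real k + 2) * ?C"
  have K: "K > 0" using dom_const_ge_1 by (simp add: K_def add_pos_nonneg)
  define d where "d = min 1 (\<delta> / K)"
  have d: "d > 0" "d \<le> 1" "d * K \<le> \<delta>" using Suc.prems K by (auto simp: d_def min_def field_simps)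
  have powr_\<beta>: "filterlim (\<lambda>t. t powr \<beta>) at_top at_top"
    by (rule real_powr_at_top) (use exponents in auto)
  have e1: "eventually (\<lambda>t. ?q (t - t powr \<beta>) \<le> (real k + d) * T (t - t powr \<beta>)) at_top"
    by (rule eventually_compose_filterlim[OF Suc.IH[OF d(1)] filterlim_minus_powr_at_top])
       (use exponents in auto)
  have e2: "eventually (\<lambda>t. T (1 * (t - t powr \<beta>)) \<le> (1 + d) * T (1 * t)) at_top"
    by (rule eventually_tail_scaled_shift_down_le[OF d(1)]) simp
  have e3: "eventually (\<lambda>t. ?q (t/2) \<le> (real k + 1) * T (t/2)) at_top"
    using eventually_compose_filterlim[OF Suc.IH[of 1] filterlim_const_mult_at_top[of "1/2"]] by simp
  have e4: "eventually (\<lambda>t. T (t powr \<beta>) \<le> d) at_top"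
    by (rule eventually_compose_filterlim[OF eventually_tail_le[OF d(1)] powr_\<beta>])
  have e5: "eventually (\<lambda>t. ?q (t powr \<beta>) \<le> d) at_top"
  proof -
    have "eventually (\<lambda>u. ?q u \<le> (real k + 1) * T u \<and> T u \<le> d / (real k + 1)) at_top"
      using Suc.IH[of 1] eventually_tail_le[of "d / (real k + 1)"] d by (auto intro: eventually_conj)
    then have "eventually (\<lambda>u. ?q u \<le> d) at_top"
      by eventually_elim (auto simp: field_simps mult.commute elim: order_trans)
    then show ?thesis by (rule eventually_compose_filterlim[OF _ powr_\<beta>])
  qed
  show ?case using e1 e2 e3 e4 e5
  proof eventually_elim
    case (elim t)
    have half: "T (t/2) \<le> ?C * T t" using tail_half_le[of t] by simp
    have A1: "?q (t - t powr \<beta>) \<le> (real k + d) * ((1 + d) * T t)"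
      using elim(1,2) d by (smt (verit) mult_left_mono of_nat_0_le_iff)
    have A2: "T (t powr \<beta>) * ?q (t/2) \<le> d * ((real k + 1) * (?C * T t))"
    proof -
      have "(real k + 1) * T (t/2) \<le> (real k + 1) * (?C * T t)"
        by (rule mult_left_mono[OF half]) simp
      then have "?q (t/2) \<le> (real k + 1) * (?C * T t)"
        using elim(3) by linarith
      then show ?thesis using elim(4) d by (intro mult_mono) (auto simp: tail_nonneg)
    qed
    have A3: "T (t/2) * ?q (t powr \<beta>) \<le> (?C * T t) * d"
      using half elim(5) dom_const_ge_1 by (intro mult_mono) (auto simp: tail_nonneg)
    have "tail (conv_pow F (Suc k)) t \<le> (real k + d) * ((1 + d) * T t) + d * ((real k + 1) * (?C * T t))
          + (?C * T t) * d + (1 + d) * T t"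
      using tail_conv_pow_Suc_le[of k t] A1 A2 A3 elim(2) by simp
    also have "\<dots> = (real k + 1) * T t + d * (real k + 2 + d + (real k + 1) * ?C + ?C) * T t"
      by (simp add: algebra_simps)
    also have "\<dots> \<le> (real k + 1) * T t + \<delta> * T t"
    proof -
      have "d * (real k + 2 + d + (real k + 1) * ?C + ?C) \<le> d * K"
        using d by (intro mult_left_mono) (auto simp: K_def algebra_simps)
      then have "d * (real k + 2 + d + (real k + 1) * ?C + ?C) \<le> \<delta>"
        using d by linarith
      then show ?thesis using tail_nonneg[of F t] by (simp add: mult_right_mono)
    qed
    finally show ?case by (simp add: algebra_simps)
  qed
qed

text \<open>Chernoff with truncation at \<open>h = y\<^sup>\<beta>'\<close> and \<open>l = y\<^sup>-\<^sup>\<beta>'\<close>, so that \<open>exp (l h) = e\<close>.\<close>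
definition mid_range_bound where
  "mid_range_bound y = y * T (y powr \<beta>') + exp (- m * y powr (\<beta> - \<beta>') + m2 * exp 1 * y powr (1 - 2*\<beta>'))"

lemma mid_range_bound_nonneg: "y \<ge> 0 \<Longrightarrow> mid_range_bound y \<ge> 0"
  unfolding mid_range_bound_def by (intro add_nonneg_nonneg mult_nonneg_nonneg tail_nonneg) auto

lemma tail_conv_pow_le_mid_range_bound:
  assumes y: "y \<ge> 1" and k: "real k \<le> y - y powr \<beta>"
  shows "tail (conv_pow F k) (m*y) \<le> mid_range_bound y"
proof -
  define l where "l = y powr (- \<beta>')"
  define h where "h = y powr \<beta>'"
  have y_pos: "y > 0" using y by simp
  have l0: "l \<ge> 0" by (simp add: l_def)
  have lh: "l * h = 1" using y_pos unfolding l_def h_def by (simp add: powr_add[symmetric])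
  have k_le_y: "real k \<le> y" using k powr_ge_zero[of y \<beta>] by linarith
  have "real k * T h \<le> y * T (y powr \<beta>')"
    unfolding h_def by (rule mult_right_mono[OF k_le_y tail_nonneg])
  moreover have "exp (- l * (m*y) + real k * (l * m + l^2 * m2 * exp (l * h)))
      \<le> exp (- m * y powr (\<beta> - \<beta>') + m2 * exp 1 * y powr (1 - 2*\<beta>'))"
  proof -
    have "- l * (m*y) + real k * (l * m + l^2 * m2 * exp (l * h))
        = - (l * m) * (y - real k) + real k * (l^2 * m2 * exp 1)"
      using lh by (simp add: algebra_simps)
    also have "\<dots> \<le> - (l * m) * y powr \<beta> + y * (l^2 * m2 * exp 1)"
    proof (intro add_mono)
      have "(l * m) * y powr \<beta> \<le> (l * m) * (y - real k)"
        using k l0 mean_pos by (intro mult_left_mono) auto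
      then show "- (l * m) * (y - real k) \<le> - (l * m) * y powr \<beta>" by simp
      show "real k * (l^2 * m2 * exp 1) \<le> y * (l^2 * m2 * exp 1)"
        using k_le_y m2_pos by (intro mult_right_mono) auto
    qed
    also have "\<dots> = - m * y powr (\<beta> - \<beta>') + m2 * exp 1 * y powr (1 - 2*\<beta>')"
    proof -
      have "l * y powr \<beta> = y powr (\<beta> - \<beta>')" unfolding l_def by (simp add: powr_add[symmetric])
      moreover have "y * l^2 = y powr (1 - 2*\<beta>')"
        using y_pos unfolding l_def power2_eq_square by (simp add: powr_add[symmetric] powr_mult_base)
      moreover have "- (l * m) * y powr \<beta> + y * (l^2 * m2 * exp 1)
          = - m * (l * y powr \<beta>) + m2 * exp 1 * (y * l^2)"
        by (simp add: algebra_simps)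
      ultimately show ?thesis by simp
    qed
    finally show ?thesis by simp
  qed
  ultimately show ?thesis
    using tail_conv_pow_chernoff_upper[OF l0, of k "m*y" h] unfolding mid_range_bound_def by linarith
qed

lemma eventually_mid_range_bound_le:
  assumes \<delta>: "\<delta> > 0"
  shows "eventually (\<lambda>y. mid_range_bound y \<le> \<delta>) at_top"
proof -
  have e1: "eventually (\<lambda>y. m2 * y powr (1 - 2*\<beta>') \<le> \<delta>/2) at_top"
    by (rule eventually_const_mult_powr_le) (use exponents \<delta> in auto)
  have e2: "eventually (\<lambda>y. (m2 * exp 1) * y powr (1 - 2*\<beta>') \<le> 1) at_top"
    by (rule eventually_const_mult_powr_le) (use exponents in auto)
  have e3: "eventually (\<lambda>y. y powr (\<beta> - \<beta>') \<ge> (1 - ln (\<delta>/2)) / m) at_top"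
    by (rule eventually_powr_ge) (use exponents in auto)
  show ?thesis using e1 e2 e3 eventually_ge_at_top[of 1]
  proof eventually_elim
    case (elim y)
    have y_pos: "y > 0" using elim by simp
    have "y * T (y powr \<beta>') \<le> y * (m2 / (y powr \<beta>')^2)"
      using y_pos tail_le_m2_div[of "y powr \<beta>'"] by (intro mult_left_mono) auto
    also have "\<dots> = m2 * y powr (1 - 2*\<beta>')"
      using y_pos by (simp add: power2_eq_square powr_add[symmetric] powr_diff field_simps)
    finally have first: "y * T (y powr \<beta>') \<le> \<delta>/2" using elim by linarith
    have "1 - ln (\<delta>/2) \<le> m * y powr (\<beta> - \<beta>')"
      using elim mean_pos by (simp add: field_simps)
    then have "- m * y powr (\<beta> - \<beta>') + m2 * exp 1 * y powr (1 - 2*\<beta>') \<le> ln (\<delta>/2)"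
      using elim by linarith
    then have "exp (- m * y powr (\<beta> - \<beta>') + m2 * exp 1 * y powr (1 - 2*\<beta>')) \<le> \<delta>/2"
      using \<delta> by (metis exp_le_cancel_iff exp_ln half_gt_zero)
    then show ?case using first unfolding mid_range_bound_def by linarith
  qed
qed

lemma large_k_exponent_le:
  assumes y: "y \<ge> 1" and c: "c > 0" "c * m2 = m/2"
    and y_large: "y powr (3*\<beta>-2) \<le> (1/2) * y powr (2*\<beta>-1)" "y powr (2*\<beta>-1) \<ge> - ln \<delta> * 4 / (c * m)"
    and k: "real k \<ge> y + y powr \<beta>"
  defines "l \<equiv> c * y powr (\<beta> - 1)"
  shows "l * (m * y) - real k * l * m + real k * l^2 * m2 \<le> ln \<delta>"
proof -
  define P where "P = y powr (\<beta> - 1)"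
  have y_pos: "y > 0" using y by simp
  have P: "P \<ge> 0" "P \<le> 1"
    using y exponents powr_mono[of "\<beta> - 1" 0 y] by (auto simp: P_def)
  have l0: "l \<ge> 0" using c P by (simp add: l_def P_def)
  have l_m2: "l^2 * m2 = (c * m / 2) * P^2"
    using c by (simp add: l_def P_def power2_eq_square algebra_simps)
  have drift_pos: "l * m - l^2 * m2 \<ge> 0"
  proof -
    have "l * m2 = P * (m/2)" using c by (simp add: l_def P_def algebra_simps)
    also have "\<dots> \<le> m" using P mean_pos mult_left_le_one_le[of "m/2" P] by simp
    finally have "l * (l * m2) \<le> l * m" using l0 by (intro mult_left_mono)
    then show ?thesis by (simp add: power2_eq_square algebra_simps)
  qed
  have P_powers: "P * y powr \<beta> = y powr (2*\<beta>-1)" "y * P^2 = y powr (2*\<beta>-1)"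
    "y powr \<beta> * P^2 = y powr (3*\<beta>-2)"
    using y_pos by (simp_all add: P_def power2_eq_square powr_add[symmetric] powr_mult_base)
  have "l * (m * y) - real k * l * m + real k * l^2 * m2 = l * m * y - real k * (l * m - l^2 * m2)"
    by (simp add: algebra_simps)
  also have "\<dots> \<le> l * m * y - (y + y powr \<beta>) * (l * m - l^2 * m2)"
    using k drift_pos by (simp add: mult_right_mono)
  also have "\<dots> = - (c * m) * (P * y powr \<beta>) + (c * m / 2) * (y * P^2 + y powr \<beta> * P^2)"
    unfolding l_m2 by (simp add: l_def P_def algebra_simps)
  also have "\<dots> = (c * m / 2) * (y powr (3*\<beta>-2) - y powr (2*\<beta>-1))"
    unfolding P_powers by (simp add: algebra_simps)
  also have "\<dots> \<le> (c * m / 2) * (- (1/2) * y powr (2*\<beta>-1))"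
    using y_large c mean_pos by (intro mult_left_mono) auto
  also have "\<dots> \<le> ln \<delta>"
    using y_large(2) c mean_pos by (simp add: field_simps)
  finally show ?thesis .
qed

lemma eventually_tail_conv_pow_large_ge:
  assumes \<delta>: "\<delta> > 0"
  shows "eventually (\<lambda>y. \<forall>k. real k \<ge> y + y powr \<beta> \<longrightarrow> tail (conv_pow F k) (m*y) \<ge> 1 - \<delta>) at_top"
proof -
  define c where "c = m / (2 * m2)"
  have c: "c > 0" "c * m2 = m/2" using mean_pos m2_pos by (auto simp: c_def)
  have e1: "eventually (\<lambda>y. y powr (3*\<beta>-2) \<le> (1/2) * y powr (2*\<beta>-1)) at_top"
    by (rule eventually_powr_le_const_mult_powr) (use exponents in auto)
  have e2: "eventually (\<lambda>y. y powr (2*\<beta>-1) \<ge> - ln \<delta> * 4 / (c * m)) at_top"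
    by (rule eventually_powr_ge) (use exponents in auto)
  show ?thesis using eventually_ge_at_top[of 1] e1 e2
  proof (eventually_elim, intro allI impI)
    case (elim y)
    fix k assume k: "real k \<ge> y + y powr \<beta>"
    have l0: "c * y powr (\<beta> - 1) \<ge> 0" using c by simp
    have "1 - tail (conv_pow F k) (m*y) \<le> \<delta>"
      using tail_conv_pow_chernoff_lower[OF l0, of k "m*y"] large_k_exponent_le[OF elim(1) c elim(2,3) k] \<delta>
      by (smt (verit) exp_le_cancel_iff exp_ln)
    then show "tail (conv_pow F k) (m*y) \<ge> 1 - \<delta>" by simp
  qed
qed

text \<open>
  For \<open>k \<le> y/2\<close> the Chernoff bound is used with \<open>l = c (ln y) / y\<close> and truncation level
  \<open>m y / 2\<^sup>j\<close>: the exponential term becomes \<open>O(y\<^sup>-\<^sup>p\<^sup>-\<^sup>1)\<close>, which the polynomial lower bound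
  \<open>T x \<ge> c' x\<^sup>-\<^sup>p\<close> (\<open>p = dom_index\<close>) absorbs, and the union-bound term is at most
  \<open>k dom_const\<^sup>j T (m y)\<close> by dominated variation.
\<close>
definition halvings where "halvings = nat \<lceil>log 2 (4 * (dom_index + 1))\<rceil>"
definition small_k_const where "small_k_const = dom_const ^ halvings + 1"
definition chernoff_coeff where "chernoff_coeff = 2 * (dom_index + 1) / m"

lemma halvings: "4 * (dom_index + 1) \<le> 2 ^ halvings"
proof -
  have "log 2 (4 * (dom_index + 1)) \<le> real halvings" unfolding halvings_def by linarith
  then have "2 powr (log 2 (4 * (dom_index + 1))) \<le> 2 powr real halvings" by (intro powr_mono) auto
  then show ?thesis using dom_index_nonneg by (simp add: powr_realpow)
qed

lemma small_k_const_ge_1: "small_k_const \<ge> 1"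
  using dom_const_ge_1 by (simp add: small_k_const_def)

lemma small_k_exponent_le:
  assumes y: "y \<ge> 1" and y_large: "(64 * chernoff_coeff^2 * m2) * y powr (-1/4) \<le> ln 2"
    and k: "real k \<le> y/2"
  defines "l \<equiv> chernoff_coeff * ln y / y" and "h \<equiv> m * y / 2^halvings"
  shows "- l * (m*y) + real k * (l * m + l^2 * m2 * exp (l * h)) \<le> ln 2 - (dom_index + 1) * ln y"
proof -
  let ?p = "dom_index" and ?a = "chernoff_coeff"
  have y_pos: "y > 0" and ln_y: "ln y \<ge> 0" using y by auto
  have am: "?a * m = 2 * (?p + 1)" using mean_pos by (simp add: chernoff_coeff_def)
  have l0: "l \<ge> 0" using dom_index_nonneg mean_pos ln_y y_pos by (simp add: l_def chernoff_coeff_def)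
  have "l * (m * y) = (?a * m) * ln y"
    using y_pos by (simp add: l_def)
  then have lmy: "l * (m * y) / 2 = (?p + 1) * ln y"
    by (simp add: am)
  have "l * h = (?a * m) * ln y / 2^halvings"
    using y_pos by (simp add: l_def h_def)
  then have "l * h = 2 * (?p + 1) * ln y / 2^halvings"
    by (simp add: am)
  also have "\<dots> \<le> ln y / 2"
    using mult_right_mono[OF halvings ln_y] by (simp add: field_simps)
  finally have "exp (l * h) \<le> y powr (1/2)" using y_pos by (simp add: powr_def)
  then have "real k * (l^2 * m2 * exp (l * h)) \<le> y * (l^2 * m2 * y powr (1/2))"
    using k y_pos m2_pos by (intro mult_mono mult_left_mono) auto
  moreover have "real k * (l * m) \<le> y / 2 * (l * m)"
    using k l0 mean_pos by (intro mult_right_mono) auto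
  moreover have "- l * (m*y) + (y/2) * (l * m) = - (l * (m*y)) / 2"
    by (simp add: algebra_simps)
  moreover have "real k * (l * m + l^2 * m2 * exp (l * h)) = real k * (l * m) + real k * (l^2 * m2 * exp (l * h))"
    by (simp add: distrib_left)
  moreover have "y * (l^2 * m2 * y powr (1/2)) \<le> ln 2"
  proof -
    have "(ln y)^2 \<le> (8 * y powr (1/8))^2"
      using ln_powr_bound[OF y, of "1/8"] ln_y by (intro power_mono) auto
    then have ln_sq: "(ln y)^2 \<le> 64 * y powr (1/4)"
      by (simp add: power2_eq_square powr_add[symmetric])
    have "y * (l^2 * m2 * y powr (1/2)) = (?a^2 * m2) * ((ln y)^2 * (y powr (1/2) / y))"
      using y_pos unfolding l_def power2_eq_square by (simp add: divide_simps)
    also have "\<dots> \<le> (?a^2 * m2) * ((64 * y powr (1/4)) * (y powr (1/2) / y))"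
      using ln_sq y_pos m2_pos by (intro mult_left_mono mult_right_mono) auto
    also have "(64 * y powr (1/4)) * (y powr (1/2) / y) = 64 * y powr (-1/4)"
    proof -
      have "y powr (1/4) * y powr (1/2) = y powr (3/4)" by (simp add: powr_add[symmetric])
      moreover have "y powr (3/4) / y = y powr (-1/4)" using powr_diff[of y "3/4" 1] y_pos by simp
      ultimately show ?thesis by (metis mult.assoc times_divide_eq_right)
    qed
    finally show ?thesis using y_large by (simp add: algebra_simps)
  qed
  ultimately show ?thesis using lmy by linarith
qed

lemma two_powr_le_tail:
  assumes y: "y \<ge> 1/m" "y \<ge> 2 / ((T 1 / dom_const) * m powr (- dom_index))"
  shows "2 * y powr (- (dom_index + 1)) \<le> T (m*y)"
proof -
  let ?c = "(T 1 / dom_const) * m powr (- dom_index)"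
  have c_pos: "?c > 0" using tail_pos[of 1] dom_const_ge_1 mean_pos by simp
  have y_pos: "y > 0" using y(2) c_pos by (smt (verit) divide_pos_pos)
  have "2 * y powr (- (dom_index + 1)) = (2 / y) * y powr (- dom_index)"
    using y_pos by (simp add: powr_diff powr_minus_divide field_simps)
  also have "\<dots> \<le> ?c * y powr (- dom_index)"
  proof (rule mult_right_mono)
    have "2 \<le> y * ?c" using y(2) c_pos by (metis pos_divide_le_eq)
    then show "2 / y \<le> ?c" using y_pos by (simp add: divide_le_eq mult.commute)
  qed simp
  also have "\<dots> = (T 1 / dom_const) * (m * y) powr (- dom_index)"
    using y_pos mean_pos by (simp add: powr_mult)
  also have "\<dots> \<le> T (m * y)"
    using y(1) mean_pos by (intro tail_ge_powr) (simp add: field_simps)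
  finally show ?thesis .
qed

lemma eventually_tail_conv_pow_small_le:
  "eventually (\<lambda>y. \<forall>k. real k \<le> y/2 \<longrightarrow> tail (conv_pow F k) (m*y) \<le> small_k_const * real k * T (m*y)) at_top"
proof -
  have e: "eventually (\<lambda>y. (64 * chernoff_coeff^2 * m2) * y powr (-1/4) \<le> ln 2) at_top"
    by (rule eventually_const_mult_powr_le) auto
  show ?thesis
    using e eventually_ge_at_top[of "1/m"] eventually_ge_at_top[of "2 / ((T 1 / dom_const) * m powr (- dom_index))"]
      eventually_ge_at_top[of 1]
  proof (eventually_elim, intro allI impI)
    case (elim y)
    fix k assume k: "real k \<le> y/2"
    show "tail (conv_pow F k) (m*y) \<le> small_k_const * real k * T (m*y)"
    proof (cases "k = 0")
      case True
      have "m * y \<ge> 0" using elim(4) mean_pos by simp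
      then show ?thesis using True by (simp add: tail_conv_pow_0[unfolded conv_pow.simps])
    next
      case False
      define l where "l = chernoff_coeff * ln y / y"
      define h where "h = m * y / 2^halvings"
      have l0: "l \<ge> 0" using elim dom_index_nonneg mean_pos by (simp add: l_def chernoff_coeff_def)
      have "exp (- l * (m*y) + real k * (l * m + l^2 * m2 * exp (l * h)))
          \<le> exp (ln 2 - (dom_index + 1) * ln y)"
        using small_k_exponent_le[OF elim(4) elim(1) k] by (simp add: l_def h_def)
      also have "\<dots> = 2 * exp (- ((dom_index + 1) * ln y))"
        by (simp add: exp_diff exp_minus divide_inverse)
      also have "\<dots> = 2 * y powr (- (dom_index + 1))"
        using elim by (simp add: powr_def algebra_simps)
      also have "\<dots> \<le> T (m*y)" using elim(2,3) by (rule two_powr_le_tail)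
      finally have "tail (conv_pow F k) (m*y) \<le> real k * T h + T (m*y)"
        using tail_conv_pow_chernoff_upper[OF l0, of k "m*y" h] by linarith
      also have "\<dots> \<le> real k * (dom_const ^ halvings * T (m*y)) + real k * T (m*y)"
        using False tail_div_pow2_le[of "m*y" halvings] tail_nonneg[of F "m*y"]
          mult_right_mono[of 1 "real k" "T (m*y)"]
        by (intro add_mono mult_left_mono) (auto simp: h_def)
      also have "\<dots> = small_k_const * real k * T (m*y)"
        by (simp add: small_k_const_def algebra_simps)
      finally show ?thesis .
    qed
  qed
qed

subsection \<open>Random number of summands\<close>

lemma eventually_tail_conv_pow_bounded_le:
  assumes \<delta>: "\<delta> > 0"
  shows "eventually (\<lambda>y. \<forall>k. real k \<le> K \<longrightarrow> tail (conv_pow F k) (m*y) \<le> (real k + \<delta>) * T (m*y)) at_top"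
proof -
  have "eventually (\<lambda>y. \<forall>k\<in>{..nat \<lfloor>K\<rfloor>}. tail (conv_pow F k) (m*y) \<le> (real k + \<delta>) * T (m*y)) at_top"
    using eventually_compose_filterlim[OF eventually_tail_conv_pow_le[OF \<delta>] filterlim_const_mult_at_top[OF mean_pos]]
    by (intro eventually_ball_finite) auto
  then show ?thesis
    by eventually_elim (metis atMost_iff le_nat_floor)
qed

lemma tail_conv_pow_le_split:
  assumes bounded: "\<forall>k. real k \<le> K \<longrightarrow> tail (conv_pow F k) (m*y) \<le> (real k + \<delta>) * T (m*y)"
    and small: "\<forall>k. real k \<le> y/2 \<longrightarrow> tail (conv_pow F k) (m*y) \<le> small_k_const * real k * T (m*y)"
    and y: "y \<ge> 1" and \<delta>: "\<delta> > 0"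
  shows "tail (conv_pow F k) (m*y) \<le> (if real k > y - y powr \<beta> then 1 else 0)
           + mid_range_bound y * (if real k > y/2 then 1 else 0)
           + (small_k_const * T (m*y)) * (real k * (if real k > K then 1 else 0))
           + T (m*y) * (real k + \<delta>)"
    (is "_ \<le> ?b1 + ?b2 + ?b3 + ?b4")
proof -
  have nonneg: "0 \<le> ?b1" "0 \<le> ?b2" "0 \<le> ?b3" "0 \<le> ?b4"
    using y \<delta> mid_range_bound_nonneg[of y] small_k_const_ge_1 tail_nonneg[of F "m*y"] by auto
  consider "real k \<le> K" | "K < real k" "real k \<le> y/2" | "y/2 < real k" "real k \<le> y - y powr \<beta>"
    | "real k > y - y powr \<beta>" by linarith
  then show ?thesis
  proof cases
    case 1
    then show ?thesis using bounded nonneg by (smt (verit) mult.commute)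
  next
    case 2
    then have "?b3 = small_k_const * real k * T (m*y)"
      and "tail (conv_pow F k) (m*y) \<le> small_k_const * real k * T (m*y)"
      using small by auto
    then show ?thesis using nonneg by linarith
  next
    case 3
    then have "?b2 = mid_range_bound y" and "tail (conv_pow F k) (m*y) \<le> mid_range_bound y"
      using tail_conv_pow_le_mid_range_bound[OF y] by auto
    then show ?thesis using nonneg by linarith
  next
    case 4
    then show ?thesis using tail_le_one[of "conv_pow F k" "m*y"] nonneg by simp
  qed
qed

lemma eventually_expectation_tail_conv_pow_le:
  fixes G :: "nat pmf" and \<mu> C \<epsilon> :: real
  assumes int: "integrable (measure_pmf G) real"
    and \<mu>: "measure_pmf.expectation G real = \<mu>" "\<mu> > 0"
    and shift: "\<And>\<delta>. \<delta> > 0 \<Longrightarrow> eventually (\<lambda>y. tail G (y - y powr \<beta>) \<le> (1+\<delta>) * tail G y) at_top"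
    and half: "eventually (\<lambda>y. tail G (y/2) \<le> C * tail G y) at_top" and C: "C \<ge> 0"
    and \<epsilon>: "\<epsilon> > 0"
  shows "eventually (\<lambda>y. measure_pmf.expectation G (\<lambda>k. tail (conv_pow F k) (m*y))
           \<le> (1 + \<epsilon>) * (tail G y + \<mu> * T (m*y))) at_top"
proof -
  define \<delta> where "\<delta> = \<epsilon> * min 1 \<mu> / 4"
  have \<delta>: "\<delta> > 0" "\<delta> \<le> \<epsilon>/4" "\<delta> \<le> \<epsilon> * \<mu> / 4" using \<epsilon> \<mu> by (auto simp: \<delta>_def min_def)
  obtain K where K: "mean_above G K \<le> \<epsilon> * \<mu> / (4 * small_k_const)" "K \<ge> 0"
    using exists_mean_above_le[OF int, of "\<epsilon> * \<mu> / (4 * small_k_const)"] \<epsilon> \<mu> small_k_const_ge_1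
    by auto
  have mid: "eventually (\<lambda>y. mid_range_bound y \<le> \<epsilon> / (2 * (C + 1))) at_top"
    by (rule eventually_mid_range_bound_le) (use \<epsilon> C in auto)
  show ?thesis
    using eventually_tail_conv_pow_bounded_le[OF \<delta>(1), of K] eventually_tail_conv_pow_small_le
      eventually_ge_at_top[of 1] mid shift[OF \<delta>(1)] half
  proof eventually_elim
    case (elim y)
    let ?T = "T (m*y)" and ?C1 = "small_k_const"
    have T0: "?T \<ge> 0" by (rule tail_nonneg)
    have "measure_pmf.expectation G (\<lambda>k. tail (conv_pow F k) (m*y))
       \<le> measure_pmf.expectation G (\<lambda>k. (if real k > y - y powr \<beta> then 1 else 0)
           + mid_range_bound y * (if real k > y/2 then 1 else 0)
           + (?C1 * ?T) * (real k * (if real k > K then 1 else 0)) + ?T * (real k + \<delta>))"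
      using elim(1,2,3) \<delta>(1)
      by (intro integral_mono integrable_tail_comp tail_conv_pow_le_split expectation_upper_bound_terms(1) int)
    also have "\<dots> = tail G (y - y powr \<beta>) + mid_range_bound y * tail G (y/2) + (?C1 * ?T) * mean_above G K
                   + ?T * (\<mu> + \<delta>)"
      by (simp only: expectation_upper_bound_terms(2)[OF int] \<mu>(1))
    also have "\<dots> \<le> (1 + \<delta>) * tail G y + (\<epsilon> / (2 * (C + 1))) * (C * tail G y)
                   + (\<epsilon> * \<mu> / 4) * ?T + ?T * (\<mu> + \<delta>)"
    proof -
      have "mid_range_bound y * tail G (y/2) \<le> (\<epsilon> / (2 * (C + 1))) * (C * tail G y)"
        using elim mid_range_bound_nonneg[of y] by (intro mult_mono) (auto simp: tail_nonneg)
      moreover have "(?C1 * ?T) * mean_above G K \<le> (\<epsilon> * \<mu> / 4) * ?T"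
        using mult_left_mono[OF K(1), of "?C1 * ?T"] small_k_const_ge_1 T0 by (simp add: field_simps)
      ultimately show ?thesis using elim by linarith
    qed
    also have "\<dots> \<le> (1 + \<epsilon>) * (tail G y + \<mu> * ?T)"
    proof -
      have "(\<epsilon> / (2 * (C + 1))) * C \<le> \<epsilon> / 2" using C \<epsilon> by (simp add: field_simps)
      then have "(\<epsilon> / (2 * (C + 1))) * (C * tail G y) \<le> (\<epsilon> / 2) * tail G y"
        using tail_nonneg[of G y] by (metis mult.assoc mult_right_mono)
      moreover have "\<delta> * tail G y \<le> (\<epsilon>/4) * tail G y"
        using \<delta> tail_nonneg[of G y] by (intro mult_right_mono) auto
      moreover have "?T * \<delta> \<le> ?T * (\<epsilon> * \<mu> / 4)"
        using \<delta> T0 by (intro mult_left_mono) auto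
      moreover have "(\<epsilon>/4) * tail G y + (\<epsilon>/2) * tail G y \<le> \<epsilon> * tail G y"
        using \<epsilon> tail_nonneg[of G y] by (simp add: algebra_simps)
      moreover have "(1 + \<epsilon>) * (tail G y + \<mu> * ?T) = tail G y + \<epsilon> * tail G y + \<mu> * ?T
          + (\<epsilon> * \<mu> / 4) * ?T + ?T * (\<epsilon> * \<mu> / 4) + (\<epsilon> * \<mu> / 2) * ?T"
        by (simp add: algebra_simps)
      moreover have "(\<epsilon> * \<mu> / 2) * ?T \<ge> 0" using \<epsilon> \<mu> T0 by simp
      ultimately show ?thesis by (simp add: algebra_simps)
    qed
    finally show ?case .
  qed
qed

lemma tail_conv_pow_ge_split:
  assumes large: "\<forall>k. real k \<ge> y + y powr \<beta> \<longrightarrow> tail (conv_pow F k) (m*y) \<ge> 1 - \<delta>"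
    and K: "(K + 1) * T (m*y) \<le> \<delta>" "K \<le> y" and y: "y \<ge> 0"
  shows "(1 - \<delta>) * (if real k > y + y powr \<beta> then 1 else 0)
           + ((1 - \<delta>) * T (m*y)) * (real k * (if real k \<le> K then 1 else 0))
         \<le> tail (conv_pow F k) (m*y)"
proof -
  let ?T = "T (m*y)"
  consider "real k > y + y powr \<beta>" | "real k \<le> K" | "K < real k" "real k \<le> y + y powr \<beta>"
    by linarith
  then show ?thesis
  proof cases
    case 1
    then have "\<not> real k \<le> K" using K y powr_ge_zero[of y \<beta>] by linarith
    then show ?thesis using 1 large by auto
  next
    case 2
    have not_large: "\<not> real k > y + y powr \<beta>" using 2 K y powr_ge_zero[of y \<beta>] by linarith
    have "real k * ?T \<le> (K + 1) * ?T" by (rule mult_right_mono) (use 2 tail_nonneg in auto)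
    then have "real k * ?T * (1 - \<delta>) \<le> real k * ?T * (1 - real k * ?T)"
      using K tail_nonneg[of F "m*y"] by (intro mult_left_mono) auto
    also have "\<dots> \<le> tail (conv_pow F k) (m*y)" by (rule tail_conv_pow_ge)
    finally show ?thesis using not_large 2 by (simp add: algebra_simps)
  next
    case 3
    then show ?thesis by (simp add: tail_nonneg)
  qed
qed

lemma eventually_expectation_tail_conv_pow_ge:
  fixes G :: "nat pmf" and \<mu> \<epsilon> :: real
  assumes int: "integrable (measure_pmf G) real"
    and \<mu>: "measure_pmf.expectation G real = \<mu>" "\<mu> > 0"
    and shift: "\<And>\<delta>. \<delta> > 0 \<Longrightarrow> eventually (\<lambda>y. tail G (y + y powr \<beta>) \<ge> (1-\<delta>) * tail G y) at_top"
    and \<epsilon>: "\<epsilon> > 0"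
  shows "eventually (\<lambda>y. measure_pmf.expectation G (\<lambda>k. tail (conv_pow F k) (m*y))
           \<ge> (1 - \<epsilon>) * (tail G y + \<mu> * T (m*y))) at_top"
proof -
  define \<delta> where "\<delta> = min 1 \<epsilon> / 4"
  have \<delta>: "\<delta> > 0" "\<delta> \<le> \<epsilon>/4" "\<delta> \<le> 1/4" using \<epsilon> by (auto simp: \<delta>_def min_def)
  obtain K where K: "mean_above G K \<le> \<epsilon> * \<mu> / 4" "K \<ge> 0"
    using exists_mean_above_le[OF int, of "\<epsilon> * \<mu> / 4"] \<epsilon> \<mu> by auto
  have small_T: "eventually (\<lambda>y. (K + 1) * T (m*y) \<le> \<delta>) at_top"
  proof -
    have "eventually (\<lambda>y. T (m*y) \<le> \<delta> / (K + 1)) at_top"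
      using eventually_compose_filterlim[OF eventually_tail_le filterlim_const_mult_at_top[OF mean_pos]] \<delta> K
      by simp
    then show ?thesis by eventually_elim (use K in \<open>simp add: field_simps\<close>)
  qed
  show ?thesis
    using eventually_tail_conv_pow_large_ge[OF \<delta>(1)] small_T eventually_ge_at_top[of K]
      eventually_ge_at_top[of 0] shift[OF \<delta>(1)]
  proof eventually_elim
    case (elim y)
    let ?T = "T (m*y)"
    have "(1 - \<delta>) * tail G (y + y powr \<beta>) + ((1 - \<delta>) * ?T) * (\<mu> - mean_above G K)
        = measure_pmf.expectation G (\<lambda>k. (1 - \<delta>) * (if real k > y + y powr \<beta> then 1 else 0)
            + ((1 - \<delta>) * ?T) * (real k * (if real k \<le> K then 1 else 0)))"
      by (simp only: expectation_lower_bound_terms(2)[OF int] \<mu>(1))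
    also have "\<dots> \<le> measure_pmf.expectation G (\<lambda>k. tail (conv_pow F k) (m*y))"
      using elim(1,2,3,4)
      by (intro integral_mono integrable_tail_comp tail_conv_pow_ge_split expectation_lower_bound_terms(1) int)
    finally have lower: "(1 - \<delta>) * tail G (y + y powr \<beta>) + ((1 - \<delta>) * ?T) * (\<mu> - mean_above G K)
       \<le> measure_pmf.expectation G (\<lambda>k. tail (conv_pow F k) (m*y))" .
    have "(1 - \<epsilon>) * tail G y \<le> (1 - \<delta>) * ((1 - \<delta>) * tail G y)"
    proof -
      have "(1 - \<delta>) * (1 - \<delta>) = 1 - 2 * \<delta> + \<delta> * \<delta>" by (simp add: algebra_simps)
      then have "(1 - \<delta>) * (1 - \<delta>) \<ge> 1 - \<epsilon>"
        using \<delta> zero_le_square[of \<delta>] by linarith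
      then show ?thesis using tail_nonneg[of G y] by (metis mult.assoc mult_right_mono)
    qed
    also have "\<dots> \<le> (1 - \<delta>) * tail G (y + y powr \<beta>)"
      using elim(5) \<delta> by (intro mult_left_mono) auto
    finally have first: "(1 - \<epsilon>) * tail G y \<le> (1 - \<delta>) * tail G (y + y powr \<beta>)" .
    have "(1 - \<epsilon>) * \<mu> \<le> (1 - \<delta>) * (\<mu> - mean_above G K)"
    proof -
      have "\<delta> * \<mu> \<le> \<epsilon> * \<mu> / 4" using \<delta> \<mu> mult_right_mono[of \<delta> "\<epsilon>/4" \<mu>] by simp
      moreover have "\<delta> * mean_above G K \<ge> 0" using \<delta> mean_above_nonneg[of G K] by simp
      moreover have "(1 - \<delta>) * (\<mu> - mean_above G K) = \<mu> - mean_above G K - \<delta> * \<mu> + \<delta> * mean_above G K"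
        by (simp add: algebra_simps)
      moreover have "(1 - \<epsilon>) * \<mu> = \<mu> - \<epsilon> * \<mu>"
        by (simp add: algebra_simps)
      moreover have "\<epsilon> * \<mu> \<ge> 0" using \<epsilon> \<mu> by simp
      ultimately show ?thesis using K(1) by argo
    qed
    then have second: "(1 - \<epsilon>) * \<mu> * ?T \<le> (1 - \<delta>) * (\<mu> - mean_above G K) * ?T"
      by (rule mult_right_mono) (rule tail_nonneg)
    show ?case using lower first second by (simp add: algebra_simps)
  qed
qed

lemma eventually_expectation_tail_conv_pow_approx:
  fixes G :: "nat pmf" and \<mu> C :: real
  assumes int: "integrable (measure_pmf G) real"
    and \<mu>: "measure_pmf.expectation G real = \<mu>" "\<mu> > 0"
    and shift_down: "\<And>\<delta>. \<delta> > 0 \<Longrightarrow> eventually (\<lambda>y. tail G (y - y powr \<beta>) \<le> (1+\<delta>) * tail G y) at_top"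
    and shift_up: "\<And>\<delta>. \<delta> > 0 \<Longrightarrow> eventually (\<lambda>y. tail G (y + y powr \<beta>) \<ge> (1-\<delta>) * tail G y) at_top"
    and half: "eventually (\<lambda>y. tail G (y/2) \<le> C * tail G y) at_top" and C: "C \<ge> 0"
    and \<epsilon>: "\<epsilon> > 0"
  shows "eventually (\<lambda>y. \<bar>measure_pmf.expectation G (\<lambda>k. tail (conv_pow F k) (m*y)) - (tail G y + \<mu> * T (m*y))\<bar>
            \<le> \<epsilon> * (tail G y + \<mu> * T (m*y))) at_top"
proof -
  have "eventually (\<lambda>y. measure_pmf.expectation G (\<lambda>k. tail (conv_pow F k) (m*y))
           \<le> (1 + \<epsilon>) * (tail G y + \<mu> * T (m*y))) at_top"
    by (rule eventually_expectation_tail_conv_pow_le[OF int \<mu> _ half C \<epsilon>]) (rule shift_down)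
  moreover have "eventually (\<lambda>y. measure_pmf.expectation G (\<lambda>k. tail (conv_pow F k) (m*y))
           \<ge> (1 - \<epsilon>) * (tail G y + \<mu> * T (m*y))) at_top"
    by (rule eventually_expectation_tail_conv_pow_ge[OF int \<mu> _ \<epsilon>]) (rule shift_up)
  ultimately show ?thesis by eventually_elim (simp add: abs_le_iff algebra_simps)
qed

subsection \<open>Induction over the generations\<close>

definition tail_sum :: "nat \<Rightarrow> real \<Rightarrow> real" where
  "tail_sum n x = (\<Sum>i<n. m^i * T (m^(i+1) * x))"

lemma tail_sum_nonneg: "tail_sum n x \<ge> 0"
  unfolding tail_sum_def using mean_pos by (intro sum_nonneg mult_nonneg_nonneg tail_nonneg) auto

lemma tail_sum_pos: "n \<ge> 1 \<Longrightarrow> tail_sum n x > 0"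
proof -
  assume n: "n \<ge> 1"
  have "m^0 * T (m^(0+1) * x) \<le> tail_sum n x" unfolding tail_sum_def
    by (rule member_le_sum) (use n mean_pos in \<open>auto intro!: mult_nonneg_nonneg tail_nonneg\<close>)
  then show ?thesis using tail_pos[of "m * x"] by simp
qed

lemma tail_sum_rescaled: "tail_sum n (z / m^n) = (\<Sum>i<n. m^i * T ((m^(i+1) / m^n) * z))"
  unfolding tail_sum_def by simp

lemma eventually_tail_sum_shift_down_le:
  assumes \<delta>: "\<delta> > 0"
  shows "eventually (\<lambda>y. tail_sum n ((y - y powr \<beta>) / m^n) \<le> (1 + \<delta>) * tail_sum n (y / m^n)) at_top"
proof -
  have "eventually (\<lambda>y. \<forall>i\<in>{..<n}. T ((m^(i+1) / m^n) * (y - y powr \<beta>)) \<le> (1 + \<delta>) * T ((m^(i+1) / m^n) * y)) at_top"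
    using mean_pos by (intro eventually_ball_finite ballI eventually_tail_scaled_shift_down_le[OF \<delta>]) auto
  then show ?thesis
  proof eventually_elim
    case (elim y)
    have "tail_sum n ((y - y powr \<beta>) / m^n) \<le> (\<Sum>i<n. m^i * ((1 + \<delta>) * T ((m^(i+1) / m^n) * y)))"
      unfolding tail_sum_rescaled using elim mean_pos by (intro sum_mono mult_left_mono) auto
    also have "\<dots> = (1 + \<delta>) * tail_sum n (y / m^n)"
      by (simp add: tail_sum_rescaled sum_distrib_left algebra_simps)
    finally show ?case .
  qed
qed

lemma eventually_tail_sum_shift_up_ge:
  assumes \<delta>: "\<delta> > 0"
  shows "eventually (\<lambda>y. tail_sum n ((y + y powr \<beta>) / m^n) \<ge> (1 - \<delta>) * tail_sum n (y / m^n)) at_top"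
proof -
  have "eventually (\<lambda>y. \<forall>i\<in>{..<n}. T ((m^(i+1) / m^n) * (y + y powr \<beta>)) \<ge> (1 - \<delta>) * T ((m^(i+1) / m^n) * y)) at_top"
    using mean_pos by (intro eventually_ball_finite ballI eventually_tail_scaled_shift_up_ge[OF \<delta>]) auto
  then show ?thesis
  proof eventually_elim
    case (elim y)
    have "(1 - \<delta>) * tail_sum n (y / m^n) = (\<Sum>i<n. m^i * ((1 - \<delta>) * T ((m^(i+1) / m^n) * y)))"
      by (simp add: tail_sum_rescaled sum_distrib_left algebra_simps)
    also have "\<dots> \<le> tail_sum n ((y + y powr \<beta>) / m^n)"
      unfolding tail_sum_rescaled using elim mean_pos by (intro sum_mono mult_left_mono) auto
    finally show ?case .
  qed
qed

lemma tail_sum_half_le: "tail_sum n ((y/2) / m^n) \<le> dom_const * tail_sum n (y / m^n)"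
proof -
  have "tail_sum n ((y/2) / m^n) \<le> (\<Sum>i<n. m^i * (dom_const * T ((m^(i+1) / m^n) * y)))"
    unfolding tail_sum_rescaled
  proof (intro sum_mono mult_left_mono)
    fix i
    show "T ((m^(i+1) / m^n) * (y/2)) \<le> dom_const * T ((m^(i+1) / m^n) * y)"
      using tail_half_le[of "(m^(i+1) / m^n) * y"] by (simp add: mult.assoc)
  qed (use mean_pos in simp)
  also have "\<dots> = dom_const * tail_sum n (y / m^n)"
    by (simp add: tail_sum_rescaled sum_distrib_left algebra_simps)
  finally show ?thesis .
qed

lemma nn_integral_conv_pow: "(\<integral>\<^sup>+x. ennreal (real x) \<partial>measure_pmf (conv_pow F k)) = ennreal (real k * m)"
proof (induction k)
  case (Suc k)
  have "(\<integral>\<^sup>+x. ennreal (real x) \<partial>measure_pmf (conv_pow F (Suc k)))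
      = (\<integral>\<^sup>+a. (\<integral>\<^sup>+b. ennreal (real a) + ennreal (real b) \<partial>measure_pmf (conv_pow F k)) \<partial>measure_pmf F)"
    by (simp add: ennreal_plus[symmetric] del: ennreal_plus)
  also have "\<dots> = (\<integral>\<^sup>+a. ennreal (real a) + ennreal (real k * m) \<partial>measure_pmf F)"
    by (simp add: nn_integral_add Suc measure_pmf.emeasure_space_1)
  also have "\<dots> = ennreal m + ennreal (real k * m)"
    using nn_integral_eq_integral[OF integrable_offspring]
    by (simp add: nn_integral_add mean_eq measure_pmf.emeasure_space_1)
  also have "\<dots> = ennreal (real (Suc k) * m)"
    using mean_pos by (simp add: ennreal_plus[symmetric] algebra_simps del: ennreal_plus)
  finally show ?case .
qed simp

lemma nn_integral_gw: "(\<integral>\<^sup>+x. ennreal (real x) \<partial>measure_pmf (gw F n)) = ennreal (m^n)"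
proof (induction n)
  case (Suc n)
  have "(\<integral>\<^sup>+x. ennreal (real x) \<partial>measure_pmf (gw F (Suc n)))
      = (\<integral>\<^sup>+k. ennreal m * ennreal (real k) \<partial>measure_pmf (gw F n))"
    using mean_pos by (simp add: nn_integral_conv_pow ennreal_mult mult.commute)
  also have "\<dots> = ennreal m * ennreal (m^n)"
    by (simp add: nn_integral_cmult Suc)
  also have "\<dots> = ennreal (m^Suc n)"
    using mean_pos by (simp add: ennreal_mult[symmetric])
  finally show ?case .
qed simp

lemma integrable_gw: "integrable (measure_pmf (gw F n)) real"
  by (rule integrableI_nn_integral_finite[where x="m^n"]) (auto simp: nn_integral_gw)

lemma expectation_gw: "measure_pmf.expectation (gw F n) real = m^n"
  using mean_pos by (subst integral_eq_nn_integral) (auto simp: nn_integral_gw)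

lemma gw_tail_regularity:
  assumes approx: "\<And>\<epsilon>. \<epsilon> > 0 \<Longrightarrow>
      eventually (\<lambda>x. \<bar>tail (gw F n) (m^n * x) - tail_sum n x\<bar> \<le> \<epsilon> * tail_sum n x) at_top"
  shows "\<And>\<delta>. \<delta> > 0 \<Longrightarrow> eventually (\<lambda>y. tail (gw F n) (y - y powr \<beta>) \<le> (1+\<delta>) * tail (gw F n) y) at_top"
    and "\<And>\<delta>. \<delta> > 0 \<Longrightarrow> eventually (\<lambda>y. tail (gw F n) (y + y powr \<beta>) \<ge> (1-\<delta>) * tail (gw F n) y) at_top"
    and "eventually (\<lambda>y. tail (gw F n) (y/2) \<le> (3 * dom_const) * tail (gw F n) y) at_top"
proof -
  let ?B = "\<lambda>y. tail_sum n (y / m^n)"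
  have mn: "m^n > 0" and m0: "m \<noteq> 0" using mean_pos by simp_all
  have err: "eventually (\<lambda>y. \<bar>tail (gw F n) y - ?B y\<bar> \<le> \<epsilon> * ?B y) at_top" if "\<epsilon> > 0" for \<epsilon>
    using eventually_compose_filterlim[OF approx[OF that] filterlim_const_mult_at_top[of "1 / m^n"]] mn m0
    by simp
  have B_nonneg: "?B y \<ge> 0" for y by (rule tail_sum_nonneg)
  show "eventually (\<lambda>y. tail (gw F n) (y - y powr \<beta>) \<le> (1+\<delta>) * tail (gw F n) y) at_top" if "\<delta> > 0" for \<delta>
    using err B_nonneg eventually_tail_sum_shift_down_le filterlim_minus_powr_at_top[OF exponents(6)] that
    by (rule relative_error_transfer_upper[where B = ?B])
  show "eventually (\<lambda>y. tail (gw F n) (y + y powr \<beta>) \<ge> (1-\<delta>) * tail (gw F n) y) at_top" if "\<delta> > 0" for \<delta>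
    using err B_nonneg eventually_tail_sum_shift_up_ge filterlim_plus_powr_at_top that
    by (rule relative_error_transfer_lower[where B = ?B])
  show "eventually (\<lambda>y. tail (gw F n) (y/2) \<le> (3 * dom_const) * tail (gw F n) y) at_top"
    using err tail_sum_half_le dom_const_ge_1
    by (intro relative_error_transfer_half[where B = ?B and C = dom_const]) auto
qed

lemma tail_gw_relative_error:
  assumes "n \<ge> 1" "\<epsilon> > 0"
  shows "eventually (\<lambda>x. \<bar>tail (gw F n) (m^n * x) - tail_sum n x\<bar> \<le> \<epsilon> * tail_sum n x) at_top"
  using assms
proof (induction n arbitrary: \<epsilon> rule: dec_induct)
  case base
  have "tail (gw F 1) (m^1 * x) = tail_sum 1 x" for x
    by (simp add: tail_sum_def tail_def bind_return_pmf map_return_pmf bind_return_pmf')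
  then show ?case using tail_sum_nonneg base by simp
next
  case (step n)
  define e where "e = min 1 (\<epsilon> / 3)"
  have e: "e > 0" "e \<le> 1" "3 * e \<le> \<epsilon>" using step.prems by (auto simp: e_def)
  have mn: "m^n > 0" using mean_pos by simp
  have "eventually (\<lambda>y. \<bar>tail (gw F (Suc n)) (m*y) - (tail (gw F n) y + m^n * T (m*y))\<bar>
            \<le> e * (tail (gw F n) y + m^n * T (m*y))) at_top"
    unfolding tail_gw_Suc using dom_const_ge_1
    by (intro eventually_expectation_tail_conv_pow_approx[OF integrable_gw expectation_gw mn
          gw_tail_regularity[OF step.IH] _ e(1)]) auto
  from eventually_compose_filterlim[OF this filterlim_const_mult_at_top[OF mn]]
  have one_step: "eventually (\<lambda>x. \<bar>tail (gw F (Suc n)) (m^Suc n * x) - (tail (gw F n) (m^n * x) + m^n * T (m^Suc n * x))\<bar>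
            \<le> e * (tail (gw F n) (m^n * x) + m^n * T (m^Suc n * x))) at_top"
    by (simp add: mult.assoc mult.left_commute)
  show ?case using one_step step.IH[OF e(1)]
  proof eventually_elim
    case (elim x)
    let ?a = "tail (gw F (Suc n)) (m^Suc n * x)" and ?b = "tail (gw F n) (m^n * x)"
    let ?s = "tail_sum n x" and ?c = "m^n * T (m^Suc n * x)"
    have c0: "?c \<ge> 0" using mn tail_nonneg by simp
    have s0: "?s \<ge> 0" by (rule tail_sum_nonneg)
    have "e * ?b \<le> e * ((1 + e) * ?s)"
      using elim(2) e by (intro mult_left_mono) (auto simp: abs_le_iff algebra_simps)
    also have "\<dots> \<le> e * (2 * ?s)" using e s0 by (intro mult_left_mono mult_right_mono) auto
    finally have b_le: "e * ?b \<le> 2 * (e * ?s)" by simp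
    have "\<bar>?a - (?s + ?c)\<bar> \<le> \<bar>?a - (?b + ?c)\<bar> + \<bar>?b - ?s\<bar>" by simp
    also have "\<dots> \<le> e * ?b + e * ?c + e * ?s" using elim by (simp add: algebra_simps)
    also have "\<dots> \<le> 3 * e * (?s + ?c)"
    proof -
      have "0 \<le> e * ?c" using e c0 by simp
      moreover have "3 * e * (?s + ?c) = 3 * (e * ?s) + 3 * (e * ?c)" by (simp add: algebra_simps)
      ultimately show ?thesis using b_le by linarith
    qed
    also have "\<dots> \<le> \<epsilon> * (?s + ?c)" using e s0 c0 by (intro mult_right_mono) auto
    finally show ?case by (simp add: tail_sum_def)
  qed
qed

end

theorem lemma6:
  fixes F :: "nat pmf" and \<gamma> :: real and n :: nat
  assumes mean_gt1: "offspring_mean F > 1"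
    and second_moment: "integrable (measure_pmf F) (\<lambda>k. (real k)^2)"
    and dominated: "\<exists>C. \<forall>x. tail F (x / 2) \<le> C * tail F x"
    and gamma: "\<gamma> > 1/2"
    and insensitive: "(\<lambda>x. tail F (x + x powr \<gamma>)) \<sim>[at_top] tail F"
    and n: "n \<ge> 1"
  shows "(\<lambda>x. measure_pmf.prob (gw F n) {k. real k / offspring_mean F ^ n > x})
           \<sim>[at_top]
         (\<lambda>x. \<Sum>i<n. offspring_mean F ^ i * tail F (offspring_mean F ^ (i+1) * x))"
proof -
  interpret gw_heavy_tail F \<gamma> using assms by unfold_locales auto
  have "{k. real k / m ^ n > x} = {k. real k > m^n * x}" for x
    using mean_pos by (auto simp: pos_less_divide_eq mult.commute)
  then have "measure_pmf.prob (gw F n) {k. real k / m ^ n > x} = tail (gw F n) (m^n * x)" for x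
    by (simp add: tail_def)
  moreover have "(\<lambda>x. tail (gw F n) (m^n * x)) \<sim>[at_top] tail_sum n"
    using tail_gw_relative_error[OF n] tail_sum_pos[OF n] by (rule asymp_equiv_of_relative_error)
  ultimately show ?thesis by (simp add: tail_sum_def[abs_def])
qed

end
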